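(* Let $d\ge1$, $X_1,\dots,X_{2d}$ the Heisenberg vector fields on $\mathbb{R}^{2d+1}$, $0<\lambda\le\Lambda$. Let $G:\mathbb{R}^{2d+1}\times\mathbb{R}\times\mathbb{R}^{2d+1}\times\mathcal{S}_{2d}\to\mathbb{R}$ satisfy $\mathcal{M}^-_{\lambda,\Lambda}(M-N)\le G(x,r,p,M)-G(x,r,p,N)\le\mathcal{M}^+_{\lambda,\Lambda}(M-N)$ for all $(x,r,p)$ and $M,N\in\mathcal{S}_{2d}$ with $N\ge0$. Let $A$ be an index set, $b^\alpha:\mathbb{R}^{2d+1}\to\mathbb{R}^{2d+1}$, $c^\alpha:\mathbb{R}^{2d+1}\to\mathbb{R}$ with $H_i(x,r,p)=\inf_\alpha\{c^\alpha(x)r-b^\alpha(x)\cdot p\}$, $H_s(x,r,p)=\sup_\alpha\{c^\alpha(x)r-b^\alpha(x)\cdot p\}$ finite, $b^\alpha$ locally Lipschitz uniformly in $\alpha$ (for every $R>0$ there is $K_R$ with $\sup_{|x|,|y|\le R,\alpha}|b^\alpha(x)-b^\alpha(y)|\le K_R|x-y|$), and $c^\alpha\ge0$ continuous on each ball uniformly in $\alpha$. Suppose there exist $\gamma_1,\dots,\gamma_{2d+1}\in\mathbb{R}$ with $\gamma_o:=\min_i\gamma_i>0$ such that $$\sup_\alpha b^\alpha(x)\cdot D\rho(x)\le-\sum_{i=1}^{2d+1}\gamma_ix_i\partial_i\rho(x)+o\Big(\frac1{\rho^3}\Big)\quad\text{as }\rho\to\infty.$$ (A) Assume $G(x,r,p,0)\ge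 H_i(x,r,p)$ for all $x,p\in\mathbb{R}^{2d+1}$, $r\in\mathbb{R}$, and let $u\in\mathrm{USC}(\mathbb{R}^{2d+1})$ be a viscosity subsolution of $G(x,u,Du,(D^2_{\mathbb{H}^d}u)^* )=0$ in $\mathbb{R}^{2d+1}$ with $\limsup_{|x|\to\infty}u/\log\rho\le0$. If either $c^\alpha\equiv0$ or $u\ge0$, then $u$ is constant. (B) Assume $G(x,r,p,0)\le H_s(x,r,p)$ for all $x,p,r$, and let $v\in\mathrm{LSC}(\mathbb{R}^{2d+1})$ be a viscosity supersolution of $G(x,v,Dv,(D^2_{\mathbb{H}^d}v)^* )=0$ with $\liminf_{|x|\to\infty}v/\log\rho\ge0$. If either $c^\alpha\equiv0$ or $v\le0$, then $v$ is constant.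
   Context: Heisenberg vector fields: $X_i=\partial_i+2x_{i+d}\partial_{2d+1}$, $X_{i+d}=\partial_{i+d}-2x_i\partial_{2d+1}$, $i=1,\dots,d$. $x_H=(x_1,\dots,x_{2d})$, $\rho(x)=(|x_H|^4+x_{2d+1}^2)^{1/4}$ (homogeneous norm), $D\rho$ its Euclidean gradient. $Du$ is the Euclidean gradient, $(D^2_{\mathbb{H}^d}u)_{ij}=X_i(X_ju)$, $Y^*$ symmetrization; viscosity sense in Euclidean variables. Pucci operators on $\mathcal{S}_{2d}$: $\mathcal{M}^\pm_{\lambda,\Lambda}(M)=\sup/\inf\,\mathrm{Tr}(-AM)$ over symmetric $A$ with $\lambda|\xi|^2\le A\xi\cdot\xi\le\Lambda|\xi|^2$. *)

theory Defs
  imports "HOL-Analysis.Analysis"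
begin

text \<open>Points of R^(2d+1) are triples (a, b, t) with a = (x_1..x_d), b = (x_(d+1)..x_(2d)),
  t = x_(2d+1); the index type 'd has d = CARD('d) elements (so d >= 1 automatically).
  Horizontal indices 1..2d are encoded as Inl k (k = 1..d) and Inr k (k+d).\<close>

type_synonym 'd heis = "(real^'d) \<times> (real^'d) \<times> real"
type_synonym 'd hmat = "real^('d + 'd)^('d + 'd)"

fun hfield :: "('d::finite + 'd) \<Rightarrow> 'd heis \<Rightarrow> 'd heis" where
  "hfield (Inl k) (a, b, t) = (axis k 1, 0, 2 * (b $ k))"
| "hfield (Inr k) (a, b, t) = (0, axis k 1, - 2 * (a $ k))"

definition Xop :: "('d::finite + 'd) \<Rightarrow> ('d heis \<Rightarrow> real) \<Rightarrow> 'd heis \<Rightarrow> real" where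
  "Xop j f x = frechet_derivative f (at x) (hfield j x)"

definition hhess :: "('d::finite heis \<Rightarrow> real) \<Rightarrow> 'd heis \<Rightarrow> 'd hmat" where
  "hhess f x = (\<chi> i j. Xop i (Xop j f) x)"

definition symmetrize :: "'n::finite hmat \<Rightarrow> 'n hmat" where
  "symmetrize M = (1/2) *\<^sub>R (M + transpose M)"

definition egrad :: "('a::euclidean_space \<Rightarrow> real) \<Rightarrow> 'a \<Rightarrow> 'a" where
  "egrad f x = (\<Sum>i\<in>Basis. frechet_derivative f (at x) i *\<^sub>R i)"

definition hnorm :: "'d::finite heis \<Rightarrow> real" where
  "hnorm x = (case x of (a, b, t) \<Rightarrow> ((norm a ^ 2 + norm b ^ 2) ^ 2 + t ^ 2) powr (1/4))"

definition symmetric_mat :: "real^'n::finite^'n \<Rightarrow> bool" where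
  "symmetric_mat M \<longleftrightarrow> transpose M = M"

definition psd :: "real^'n::finite^'n \<Rightarrow> bool" where
  "psd N \<longleftrightarrow> (\<forall>\<xi>. 0 \<le> \<xi> \<bullet> (N *v \<xi>))"

definition ellipt_set :: "real \<Rightarrow> real \<Rightarrow> (real^'n::finite^'n) set" where
  "ellipt_set l L = {A. symmetric_mat A \<and>
      (\<forall>\<xi>. l * norm \<xi> ^ 2 \<le> \<xi> \<bullet> (A *v \<xi>) \<and> \<xi> \<bullet> (A *v \<xi>) \<le> L * norm \<xi> ^ 2)}"

definition pucci_plus :: "real \<Rightarrow> real \<Rightarrow> real^'n^'n \<Rightarrow> real" where
  "pucci_plus l L M = (SUP A\<in>ellipt_set l L. trace (- (A ** M)))"

definition pucci_minus :: "real \<Rightarrow> real \<Rightarrow> real^'n^'n \<Rightarrow> real" where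
  "pucci_minus l L M = (INF A\<in>ellipt_set l L. trace (- (A ** M)))"

definition usc :: "('a::metric_space \<Rightarrow> real) \<Rightarrow> bool" where
  "usc u \<longleftrightarrow> (\<forall>x. \<forall>e>0. \<exists>\<delta>>0. \<forall>y. dist y x < \<delta> \<longrightarrow> u y < u x + e)"

definition lsc :: "('a::metric_space \<Rightarrow> real) \<Rightarrow> bool" where
  "lsc u \<longleftrightarrow> (\<forall>x. \<forall>e>0. \<exists>\<delta>>0. \<forall>y. dist y x < \<delta> \<longrightarrow> u x - e < u y)"

definition C2 :: "('a::euclidean_space \<Rightarrow> real) \<Rightarrow> bool" where
  "C2 f \<longleftrightarrow> (\<exists>(D :: 'a \<Rightarrow> 'a \<Rightarrow>\<^sub>L real) (D2 :: 'a \<Rightarrow> 'a \<Rightarrow>\<^sub>L ('a \<Rightarrow>\<^sub>L real)).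
      (\<forall>x. (f has_derivative blinfun_apply (D x)) (at x)) \<and>
      (\<forall>x. (D has_derivative blinfun_apply (D2 x)) (at x)) \<and> continuous_on UNIV D2)"

definition visc_sub ::
  "('d::finite heis \<Rightarrow> real \<Rightarrow> 'd heis \<Rightarrow> 'd hmat \<Rightarrow> real) \<Rightarrow> ('d heis \<Rightarrow> real) \<Rightarrow> bool" where
  "visc_sub G u \<longleftrightarrow> usc u \<and>
     (\<forall>\<phi> x0. C2 \<phi> \<longrightarrow> (\<exists>e>0. \<forall>y. dist y x0 < e \<longrightarrow> u y - \<phi> y \<le> u x0 - \<phi> x0) \<longrightarrow>
        G x0 (u x0) (egrad \<phi> x0) (symmetrize (hhess \<phi> x0)) \<le> 0)"

definition visc_super ::
  "('d::finite heis \<Rightarrow> real \<Rightarrow> 'd heis \<Rightarrow> 'd hmat \<Rightarrow> real) \<Rightarrow> ('d heis \<Rightarrow> real) \<Rightarrow> bool" where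
  "visc_super G v \<longleftrightarrow> lsc v \<and>
     (\<forall>\<phi> x0. C2 \<phi> \<longrightarrow> (\<exists>e>0. \<forall>y. dist y x0 < e \<longrightarrow> v y - \<phi> y \<ge> v x0 - \<phi> x0) \<longrightarrow>
        G x0 (v x0) (egrad \<phi> x0) (symmetrize (hhess \<phi> x0)) \<ge> 0)"

definition gscale :: "('d::finite \<Rightarrow> real) \<Rightarrow> ('d \<Rightarrow> real) \<Rightarrow> real \<Rightarrow> 'd heis \<Rightarrow> 'd heis" where
  "gscale g1 g2 g3 x = (case x of (a, b, t) \<Rightarrow> ((\<chi> k. g1 k * a $ k), (\<chi> k. g2 k * b $ k), g3 * t))"

end

theory Submission
  imports Defs
begin

text \<open>Both parts reduce to a Liouville theorem for upper semicontinuous viscosity subsolutions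
  of the extremal inequality \<open>\<M>\<^sup>-(D\<^sup>2\<^sub>H u) - sup\<^sub>\<alpha> b\<^sup>\<alpha> \<bullet> Du \<le> 0\<close> (part (B) is applied to
  \<open>-v\<close>); the sign condition on \<open>c\<close> lets the zeroth-order term be dropped.
  The function \<open>ln(1 + \<rho>\<^sup>4)/4\<close>, a smooth version of \<open>ln \<rho>\<close>, is a strict supersolution
  near infinity: the drift condition makes \<open>b\<^sup>\<alpha>\<close> point inwards at rate \<open>\<gamma>\<^sub>o\<close>, while its
  horizontal Hessian decays like \<open>\<rho>\<^sup>-\<^sup>2\<close>. As \<open>u\<close> grows slower than \<open>\<epsilon> ln \<rho>\<close> for every
  \<open>\<epsilon> > 0\<close>, comparing \<open>u\<close> with \<open>\<epsilon> ln(1 + \<rho>\<^sup>4)/4\<close> and letting \<open>\<epsilon> \<rightarrow> 0\<close> shows that \<open>u\<close>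
  attains its maximum. By a Hopf lemma the set where the maximum is attained satisfies Bony's
  condition, so it is invariant under horizontal lines; since horizontal lines connect any two
  points, \<open>u\<close> is constant.\<close>

declare split_paired_All [simp del] split_paired_Ex [simp del]

section \<open>\<open>C\<^sup>2\<close> functions and horizontal derivatives\<close>

lemma C2_const: "C2 (\<lambda>x. c)"
  unfolding C2_def
  by (rule exI[of _ "\<lambda>x. 0"], rule exI[of _ "\<lambda>x. 0"]) (auto intro!: derivative_eq_intros)

lemma C2_linear: assumes "bounded_linear f" shows "C2 f"
  unfolding C2_def
proof (rule exI[of _ "\<lambda>x. Blinfun f"], rule exI[of _ "\<lambda>x. 0"], intro conjI allI)
  fix x show "(f has_derivative blinfun_apply (Blinfun f)) (at x)"
    using assms by (simp add: bounded_linear_Blinfun_apply bounded_linear_imp_has_derivative)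
qed (auto intro!: derivative_eq_intros)

lemma C2_add: assumes "C2 f" "C2 g" shows "C2 (\<lambda>x. f x + g x)"
proof -
  obtain Df D2f where f: "\<forall>x. (f has_derivative blinfun_apply (Df x)) (at x)"
    "\<forall>x. (Df has_derivative blinfun_apply (D2f x)) (at x)" "continuous_on UNIV D2f"
    using assms(1) unfolding C2_def by blast
  obtain Dg D2g where g: "\<forall>x. (g has_derivative blinfun_apply (Dg x)) (at x)"
    "\<forall>x. (Dg has_derivative blinfun_apply (D2g x)) (at x)" "continuous_on UNIV D2g"
    using assms(2) unfolding C2_def by blast
  show ?thesis unfolding C2_def
    using f g
    by (intro exI[of _ "\<lambda>x. Df x + Dg x"] exI[of _ "\<lambda>x. D2f x + D2g x"])
      (auto intro!: derivative_eq_intros continuous_intros simp: blinfun.add_left)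
qed

lemma C2_mult: assumes "C2 f" "C2 g" shows "C2 (\<lambda>x. f x * g x)"
proof -
  obtain Df D2f where f: "\<forall>x. (f has_derivative blinfun_apply (Df x)) (at x)"
    "\<forall>x. (Df has_derivative blinfun_apply (D2f x)) (at x)" "continuous_on UNIV D2f"
    using assms(1) unfolding C2_def by blast
  obtain Dg D2g where g: "\<forall>x. (g has_derivative blinfun_apply (Dg x)) (at x)"
    "\<forall>x. (Dg has_derivative blinfun_apply (D2g x)) (at x)" "continuous_on UNIV D2g"
    using assms(2) unfolding C2_def by blast
  have cont: "continuous_on UNIV f" "continuous_on UNIV g" "continuous_on UNIV Df" "continuous_on UNIV Dg"
    using has_derivative_continuous[OF f(1)[rule_format]] has_derivative_continuous[OF g(1)[rule_format]]
      has_derivative_continuous[OF f(2)[rule_format]] has_derivative_continuous[OF g(2)[rule_format]]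
    by (auto intro: continuous_at_imp_continuous_on)
  show ?thesis unfolding C2_def
  proof (rule exI[of _ "\<lambda>x. f x *\<^sub>R Dg x + g x *\<^sub>R Df x"],
      rule exI[of _ "\<lambda>x. f x *\<^sub>R D2g x + (blinfun_scaleR_left (Dg x) o\<^sub>L Df x)
           + (g x *\<^sub>R D2f x + (blinfun_scaleR_left (Df x) o\<^sub>L Dg x))"], intro conjI allI)
    fix x
    show "((\<lambda>x. f x * g x) has_derivative blinfun_apply (f x *\<^sub>R Dg x + g x *\<^sub>R Df x)) (at x)"
      using f(1) g(1)
      by (auto intro!: derivative_eq_intros simp: blinfun.add_left blinfun.scaleR_left fun_eq_iff algebra_simps)
    show "((\<lambda>x. f x *\<^sub>R Dg x + g x *\<^sub>R Df x) has_derivative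
       blinfun_apply (f x *\<^sub>R D2g x + (blinfun_scaleR_left (Dg x) o\<^sub>L Df x)
           + (g x *\<^sub>R D2f x + (blinfun_scaleR_left (Df x) o\<^sub>L Dg x)))) (at x)"
      using f g
      by (auto intro!: derivative_eq_intros simp: blinfun.add_left blinfun.scaleR_left fun_eq_iff algebra_simps)
  next
    show "continuous_on UNIV (\<lambda>x. f x *\<^sub>R D2g x + (blinfun_scaleR_left (Dg x) o\<^sub>L Df x)
           + (g x *\<^sub>R D2f x + (blinfun_scaleR_left (Df x) o\<^sub>L Dg x)))"
      using f g cont
      by (intro continuous_intros continuous_on_compose2[OF
            bounded_linear.continuous_on[OF bounded_linear_blinfun_scaleR_left]]) auto
  qed
qed

lemma C2_compose:
  assumes h: "C2 h" and S: "open S" "\<And>x. h x \<in> S"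
    and F1: "\<And>t. t \<in> S \<Longrightarrow> (F has_real_derivative F1 t) (at t)"
    and F2: "\<And>t. t \<in> S \<Longrightarrow> (F1 has_real_derivative F2 t) (at t)"
    and cF2: "continuous_on S F2"
  shows "C2 (\<lambda>x. F (h x))"
proof -
  obtain Dh D2h where f: "\<forall>x. (h has_derivative blinfun_apply (Dh x)) (at x)"
    "\<forall>x. (Dh has_derivative blinfun_apply (D2h x)) (at x)" "continuous_on UNIV D2h"
    using h unfolding C2_def by blast
  have ch: "continuous_on UNIV h" and cDh: "continuous_on UNIV Dh"
    using has_derivative_continuous[OF f(1)[rule_format]] has_derivative_continuous[OF f(2)[rule_format]]
    by (auto intro: continuous_at_imp_continuous_on)
  have cF1h: "continuous_on UNIV (\<lambda>x. F1 (h x))"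
    by (rule continuous_on_compose2[of S F1 UNIV h])
      (use F2 ch S in \<open>auto intro: DERIV_continuous continuous_at_imp_continuous_on\<close>)
  have cF2h: "continuous_on UNIV (\<lambda>x. F2 (h x))"
    by (rule continuous_on_compose2[OF cF2 ch]) (use S in auto)
  show ?thesis unfolding C2_def
  proof (rule exI[of _ "\<lambda>x. F1 (h x) *\<^sub>R Dh x"],
      rule exI[of _ "\<lambda>x. F1 (h x) *\<^sub>R D2h x + F2 (h x) *\<^sub>R (blinfun_scaleR_left (Dh x) o\<^sub>L Dh x)"],
      intro conjI allI)
    fix x
    have d1: "((\<lambda>x. F (h x)) has_derivative (\<lambda>v. Dh x v * F1 (h x))) (at x)"
      by (rule DERIV_compose_FDERIV[OF F1[OF S(2)] f(1)[rule_format]])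
    then show "((\<lambda>x. F (h x)) has_derivative blinfun_apply (F1 (h x) *\<^sub>R Dh x)) (at x)"
      by (simp add: scaleR_blinfun.rep_eq mult.commute)
    have d2: "((\<lambda>x. F1 (h x)) has_derivative (\<lambda>v. Dh x v * F2 (h x))) (at x)"
      by (rule DERIV_compose_FDERIV[OF F2[OF S(2)] f(1)[rule_format]])
    have "blinfun_apply (F1 (h x) *\<^sub>R D2h x + F2 (h x) *\<^sub>R (blinfun_scaleR_left (Dh x) o\<^sub>L Dh x))
        = (\<lambda>k. F1 (h x) *\<^sub>R blinfun_apply (D2h x) k + (Dh x k * F2 (h x)) *\<^sub>R Dh x)"
      by (simp add: fun_eq_iff plus_blinfun.rep_eq scaleR_blinfun.rep_eq mult.commute)
    then show "((\<lambda>x. F1 (h x) *\<^sub>R Dh x) has_derivative blinfun_apply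
       (F1 (h x) *\<^sub>R D2h x + F2 (h x) *\<^sub>R (blinfun_scaleR_left (Dh x) o\<^sub>L Dh x))) (at x)"
      using has_derivative_scaleR[OF d2 f(2)[rule_format]] by simp
  next
    show "continuous_on UNIV
        (\<lambda>x. F1 (h x) *\<^sub>R D2h x + F2 (h x) *\<^sub>R (blinfun_scaleR_left (Dh x) o\<^sub>L Dh x))"
      using cF1h cF2h f(3) cDh
      by (intro continuous_intros continuous_on_compose2[OF
            bounded_linear.continuous_on[OF bounded_linear_blinfun_scaleR_left]]) auto
  qed
qed

lemma C2_sum: "finite I \<Longrightarrow> (\<And>i. i \<in> I \<Longrightarrow> C2 (f i)) \<Longrightarrow> C2 (\<lambda>x. \<Sum>i\<in>I. f i x)"
  by (induction I rule: finite_induct) (auto intro: C2_add C2_const)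

lemma C2_cmult: "C2 f \<Longrightarrow> C2 (\<lambda>x. c * f x)"
  using C2_mult[OF C2_const] by blast

lemma C2_diff: "C2 f \<Longrightarrow> C2 g \<Longrightarrow> C2 (\<lambda>x. f x - g x)"
  using C2_add[of f "\<lambda>x. (-1) * g x"] C2_cmult[of g "-1"] by simp

lemma C2_norm_diff_power2:
  fixes f :: "'a::euclidean_space \<Rightarrow> 'b::euclidean_space"
  assumes "bounded_linear f" shows "C2 (\<lambda>x. norm (f x - c) ^ 2)"
proof -
  have e: "norm (f x - c) ^ 2 = (\<Sum>i\<in>Basis. (f x \<bullet> i - c \<bullet> i) * (f x \<bullet> i - c \<bullet> i))" for x
    by (simp only: power2_norm_eq_inner euclidean_inner[of "f x - c" "f x - c"]) (simp add: inner_diff_left)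
  have "C2 (\<lambda>x. f x \<bullet> i - c \<bullet> i)" for i
    by (intro C2_diff C2_const C2_linear bounded_linear_inner_left_comp assms)
  then show ?thesis unfolding e by (intro C2_sum C2_mult) auto
qed

lemma C2_differentiable: "C2 f \<Longrightarrow> f differentiable (at y)"
  unfolding C2_def differentiable_def by blast

definition dhfield :: "('d::finite + 'd) \<Rightarrow> 'd heis \<Rightarrow> 'd heis" where
  "dhfield j v = (case j of Inl k \<Rightarrow> (0, 0, 2 * fst (snd v) $ k) | Inr k \<Rightarrow> (0, 0, -2 * fst v $ k))"

lemma hfield_split: "hfield j y = hfield j 0 + dhfield j y"
  by (cases j; cases y) (auto simp: dhfield_def zero_prod_def)

lemma bounded_linear_dhfield: "bounded_linear (dhfield j)"
  unfolding linear_conv_bounded_linear[symmetric]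
  by (cases j) (auto simp: linear_iff dhfield_def algebra_simps)

lemma hfield_has_derivative: "(hfield j has_derivative dhfield j) (at y)"
proof -
  have "((\<lambda>y. hfield j 0 + dhfield j y) has_derivative dhfield j) (at y)"
    using bounded_linear_dhfield by (auto intro!: derivative_eq_intros bounded_linear_imp_has_derivative)
  then show ?thesis by (subst hfield_split[abs_def]) simp
qed

lemma continuous_on_dhfield [continuous_intros]:
  "continuous_on S f \<Longrightarrow> continuous_on S (\<lambda>x. dhfield j (f x))"
  using bounded_linear.continuous_on[OF bounded_linear_dhfield] by blast

lemma continuous_on_hfield [continuous_intros]:
  "continuous_on S f \<Longrightarrow> continuous_on S (\<lambda>x. hfield j (f x))"
proof -
  have "continuous_on UNIV (hfield j)"
    using hfield_has_derivative by (meson continuous_at_imp_continuous_on has_derivative_continuous)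
  then show "continuous_on S f \<Longrightarrow> continuous_on S (\<lambda>x. hfield j (f x))"
    by (rule continuous_on_compose2) auto
qed

lemma Xop_has_derivative: "(f has_derivative f') (at y) \<Longrightarrow> Xop j f y = f' (hfield j y)"
  unfolding Xop_def by (simp add: frechet_derivative_at[symmetric])

lemma Xop_has_derivative_fun:
  "(\<And>y. (f has_derivative f' y) (at y)) \<Longrightarrow> Xop j f = (\<lambda>y. f' y (hfield j y))"
  using Xop_has_derivative by blast

lemma C2_Xop_differentiable: assumes "C2 f" shows "Xop j f differentiable (at y)"
proof -
  obtain Df D2f where f: "\<forall>x. (f has_derivative blinfun_apply (Df x)) (at x)"
    "\<forall>x. (Df has_derivative blinfun_apply (D2f x)) (at x)"
    using assms unfolding C2_def by blast
  have X: "Xop j f = (\<lambda>y. blinfun_apply (Df y) (hfield j y))"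
    by (rule Xop_has_derivative_fun) (use f in auto)
  show ?thesis unfolding X differentiable_def
    using blinfun.FDERIV[OF f(2)[rule_format] hfield_has_derivative] by blast
qed

lemma hhess_compose:
  assumes h: "\<And>y. h differentiable (at y)" and hX: "\<And>j. Xop j h differentiable (at x)"
    and S: "\<And>y. h y \<in> S"
    and F1: "\<And>t. t \<in> S \<Longrightarrow> (F has_real_derivative F1 t) (at t)"
    and F2: "\<And>t. t \<in> S \<Longrightarrow> (F1 has_real_derivative F2 t) (at t)"
  shows "hhess (\<lambda>y. F (h y)) x
    = (\<chi> i j. F1 (h x) * hhess h x $ i $ j + F2 (h x) * (Xop i h x * Xop j h x))"
proof -
  have hd: "(h has_derivative frechet_derivative h (at y)) (at y)" for y
    using h frechet_derivative_works by blast
  have X1: "Xop j (\<lambda>y. F (h y)) = (\<lambda>y. F1 (h y) * Xop j h y)" for j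
  proof
    fix y
    have "((\<lambda>y. F (h y)) has_derivative (\<lambda>v. frechet_derivative h (at y) v * F1 (h y))) (at y)"
      by (rule DERIV_compose_FDERIV[OF F1[OF S] hd])
    then show "Xop j (\<lambda>y. F (h y)) y = F1 (h y) * Xop j h y"
      by (simp add: Xop_has_derivative Xop_has_derivative[OF hd])
  qed
  have X2: "Xop i (\<lambda>y. F1 (h y) * Xop j h y) x
      = F1 (h x) * Xop i (Xop j h) x + F2 (h x) * (Xop i h x * Xop j h x)" for i j
  proof -
    have g: "(Xop j h has_derivative frechet_derivative (Xop j h) (at x)) (at x)"
      using hX frechet_derivative_works by blast
    have "((\<lambda>y. F1 (h y)) has_derivative (\<lambda>v. frechet_derivative h (at x) v * F2 (h x))) (at x)"
      by (rule DERIV_compose_FDERIV[OF F2[OF S] hd])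
    from has_derivative_mult[OF this g] show ?thesis
      by (simp add: Xop_has_derivative Xop_has_derivative[OF g] Xop_has_derivative[OF hd] algebra_simps)
  qed
  show ?thesis unfolding hhess_def X1 X2 by simp
qed

lemma egrad_inner: assumes "(f has_derivative f') (at x)" shows "egrad f x \<bullet> v = f' v"
proof -
  have l: "linear f'" using assms has_derivative_linear by blast
  have "egrad f x = (\<Sum>i\<in>Basis. f' i *\<^sub>R i)"
    unfolding egrad_def using assms frechet_derivative_at by metis
  then have "egrad f x \<bullet> v = (\<Sum>i\<in>Basis. (v \<bullet> i) * f' i)"
    by (simp add: inner_sum_right inner_commute mult.commute)
  also have "\<dots> = f' (\<Sum>i\<in>Basis. (v \<bullet> i) *\<^sub>R i)"
    by (simp add: linear_sum[OF l] linear_scale[OF l])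
  finally show ?thesis by (simp add: euclidean_representation)
qed

lemma egrad_eqI:
  assumes "(f has_derivative f') (at x)" and "\<And>v. f' v = g \<bullet> v" shows "egrad f x = g"
proof -
  have "egrad f x \<bullet> v = g \<bullet> v" for v using egrad_inner[OF assms(1)] assms(2) by simp
  then show ?thesis by (metis euclidean_eqI inner_commute)
qed

lemma Xop_uminus:
  assumes "\<And>y. f differentiable (at y)" shows "Xop j (\<lambda>y. - f y) = (\<lambda>y. - Xop j f y)"
proof
  fix y
  have hd: "(f has_derivative frechet_derivative f (at y)) (at y)"
    using assms frechet_derivative_works by blast
  show "Xop j (\<lambda>y. - f y) y = - Xop j f y"
    using Xop_has_derivative[OF has_derivative_minus[OF hd]] Xop_has_derivative[OF hd] by simp
qed

lemma hhess_uminus: assumes "C2 f" shows "hhess (\<lambda>y. - f y) x = - hhess f x"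
  unfolding hhess_def Xop_uminus[OF C2_differentiable[OF assms]]
  by (subst Xop_uminus) (auto simp: C2_Xop_differentiable[OF assms] vec_eq_iff)

lemma egrad_uminus: assumes "C2 f" shows "egrad (\<lambda>y. - f y) x = - egrad f x"
proof -
  have hd: "(f has_derivative frechet_derivative f (at x)) (at x)"
    using C2_differentiable[OF assms] frechet_derivative_works by blast
  show ?thesis unfolding egrad_def
    using frechet_derivative_at[OF has_derivative_minus[OF hd], symmetric]
    by (simp add: sum_negf[symmetric])
qed

section \<open>Uniformly elliptic matrices\<close>

lemma trace_matrix_mult: "trace (A ** M) = (\<Sum>i\<in>UNIV. \<Sum>k\<in>UNIV. A$i$k * M$k$i)"
  by (simp add: trace_def matrix_matrix_mult_def)

lemma trace_uminus: "trace (- (M::real^'n^'n)) = - trace M"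
  by (simp add: trace_def sum_negf)

lemma matrix_mult_uminus_right: "(A::real^'n^'n) ** (- H) = - (A ** H)"
  by (simp add: vec_eq_iff matrix_matrix_mult_def sum_negf)

lemma quadratic_form_eq: "\<xi> \<bullet> (A *v \<xi>) = (\<Sum>i\<in>UNIV. \<Sum>k\<in>UNIV. A$i$k * \<xi>$k * \<xi>$i)"
  by (simp add: inner_vec_def matrix_vector_mult_def sum_distrib_left mult_ac)

lemma trace_mult_combination:
  "trace ((A::real^'n^'n) ** (\<chi> i j. a * S$i$j + c * (g$i * g$j)))
    = a * trace (A ** S) + c * (g \<bullet> (A *v g))"
  by (simp add: trace_matrix_mult quadratic_form_eq sum_distrib_left sum.distrib[symmetric] algebra_simps)

lemma symmetric_mat_zero: "symmetric_mat (0::real^'n^'n)"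
  by (simp add: symmetric_mat_def transpose_def vec_eq_iff)

lemma psd_zero: "psd (0::real^'n^'n)"
  by (simp add: psd_def)

lemma symmetric_mat_symmetrize: "symmetric_mat (symmetrize M)"
  by (auto simp: symmetric_mat_def symmetrize_def transpose_def vec_eq_iff)

lemma trace_scaleR: "trace (c *\<^sub>R X) = c * trace (X::real^'n^'n)"
  by (simp add: trace_def sum_distrib_left)

lemma trace_mult_symmetrize:
  assumes "symmetric_mat A" shows "trace (A ** symmetrize M) = trace (A ** M)"
proof -
  have s: "A$i$k = A$k$i" for i k using assms by (auto simp: symmetric_mat_def transpose_def vec_eq_iff)
  have "trace (A ** transpose M) = trace (A ** M)"
    unfolding trace_matrix_mult transpose_def by (simp, subst sum.swap) (simp add: s)
  then show ?thesis
    by (simp add: symmetrize_def matrix_scalar_ac matrix_add_ldistrib trace_add trace_scaleR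
        flip: scalar_matrix_assoc)
qed

lemma mat_in_ellipt_set: assumes "l \<le> L" shows "mat l \<in> ellipt_set l L"
proof -
  have m: "mat l *v \<xi> = l *\<^sub>R \<xi>" for \<xi> :: "real^'n"
    by (simp add: matrix_vector_mult_def mat_def vec_eq_iff if_distrib if_distribR cong: if_cong)
  have q: "\<xi> \<bullet> (mat l *v \<xi>) = l * norm \<xi> ^ 2" for \<xi> :: "real^'n"
    by (simp add: m power2_norm_eq_inner)
  show ?thesis using assms unfolding ellipt_set_def symmetric_mat_def
    by (simp add: transpose_mat q mult_right_mono)
qed

lemma ellipt_set_nonempty: "l \<le> L \<Longrightarrow> ellipt_set l L \<noteq> {}"
  using mat_in_ellipt_set by blast

lemma ellipt_set_symmetric: "A \<in> ellipt_set l L \<Longrightarrow> symmetric_mat A"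
  by (simp add: ellipt_set_def)

lemma ellipt_set_lower: "A \<in> ellipt_set l L \<Longrightarrow> l * norm \<xi> ^ 2 \<le> \<xi> \<bullet> (A *v \<xi>)"
  by (simp add: ellipt_set_def)

lemma ellipt_set_upper: "A \<in> ellipt_set l L \<Longrightarrow> \<xi> \<bullet> (A *v \<xi>) \<le> L * norm \<xi> ^ 2"
  by (simp add: ellipt_set_def)

lemma quadratic_form_axis_pair:
  "(axis i 1 + s *\<^sub>R axis j 1) \<bullet> (A *v (axis i 1 + s *\<^sub>R axis j 1))
   = A$i$i + s * A$i$j + s * A$j$i + s * s * A$j$j"
  by (simp add: matrix_vector_mult_basis inner_add_left inner_add_right matrix_vector_right_distrib
      matrix_vector_mult_scaleR inner_axis' column_def algebra_simps)

lemma ellipt_set_entry_bound: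
  assumes A: "A \<in> ellipt_set l L" and l: "0 \<le> l" shows "\<bar>A $ i $ j\<bar> \<le> L"
proof -
  have diag: "A $ k $ k = axis k 1 \<bullet> (A *v axis k 1)" for k
    by (simp add: matrix_vector_mult_basis inner_axis' column_def)
  have diag_bounds: "0 \<le> A$k$k" "A$k$k \<le> L" for k
    using ellipt_set_lower[OF A, of "axis k 1"] ellipt_set_upper[OF A, of "axis k 1"] l
    by (auto simp: diag norm_axis_1)
  show ?thesis
  proof (cases "i = j")
    case True
    then show ?thesis using diag_bounds by auto
  next
    case False
    have n: "norm (axis i 1 + s *\<^sub>R axis j (1::real)) ^ 2 = 1 + s * s" for s :: real
      using False by (simp add: power2_norm_eq_inner inner_add_left inner_add_right inner_axis_axis)
    have pair: "A$i$i + s * A$i$j + s * A$j$i + s * s * A$j$j \<le> L * (1 + s * s)" for s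
      using ellipt_set_upper[OF A, of "axis i 1 + s *\<^sub>R axis j 1"]
      unfolding quadratic_form_axis_pair n .
    have "A$i$j = A$j$i"
      using ellipt_set_symmetric[OF A] by (auto simp: symmetric_mat_def transpose_def vec_eq_iff)
    then show ?thesis using pair[of 1] pair[of "-1"] diag_bounds[of i] diag_bounds[of j] by auto
  qed
qed

lemma ellipt_set_trace_bound:
  assumes A: "A \<in> ellipt_set l L" and l: "0 \<le> l"
  shows "\<bar>trace (A ** M)\<bar> \<le> L * (\<Sum>i\<in>UNIV. \<Sum>k\<in>UNIV. \<bar>M$i$k\<bar>)"
proof -
  have "\<bar>trace (A ** M)\<bar> \<le> (\<Sum>i\<in>UNIV. \<Sum>k\<in>UNIV. \<bar>A$i$k * M$k$i\<bar>)"
    unfolding trace_matrix_mult by (rule order_trans[OF sum_abs]) (intro sum_mono sum_abs)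
  also have "\<dots> \<le> (\<Sum>i\<in>UNIV. \<Sum>k\<in>UNIV. L * \<bar>M$k$i\<bar>)"
    by (intro sum_mono) (auto simp: abs_mult intro!: mult_right_mono ellipt_set_entry_bound[OF A l])
  also have "\<dots> = L * (\<Sum>i\<in>UNIV. \<Sum>k\<in>UNIV. \<bar>M$i$k\<bar>)"
    by (subst sum.swap) (simp add: sum_distrib_left)
  finally show ?thesis .
qed

section \<open>Extremal subsolutions\<close>

definition local_max_at :: "('a::metric_space \<Rightarrow> real) \<Rightarrow> 'a \<Rightarrow> bool" where
  "local_max_at f x \<longleftrightarrow> (\<exists>e>0. \<forall>y. dist y x < e \<longrightarrow> f y \<le> f x)"

definition strict_extremal_super ::
  "real \<Rightarrow> real \<Rightarrow> ('a \<Rightarrow> 'd::finite heis \<Rightarrow> 'd heis) \<Rightarrow> ('d heis \<Rightarrow> real) \<Rightarrow> 'd heis \<Rightarrow> bool" where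
  "strict_extremal_super l L b \<phi> x \<longleftrightarrow> (\<exists>m1 m2. 0 < m1 + m2 \<and>
     (\<forall>A\<in>ellipt_set l L. m1 \<le> - trace (A ** hhess \<phi> x)) \<and> (\<forall>\<alpha>. m2 \<le> - (b \<alpha> x \<bullet> egrad \<phi> x)))"

text \<open>\<open>extremal_sub l L b u\<close> says that \<open>u\<close> is a viscosity subsolution of
  \<open>\<M>\<^sup>-(D\<^sup>2\<^sub>H u) - sup\<^sub>\<alpha> b\<^sup>\<alpha> \<bullet> Du \<le> 0\<close>. The infimum over the
  ellipticity class and the supremum over \<open>\<alpha>\<close> enter only through lower bounds \<open>m1\<close>, \<open>m2\<close>,
  so no junk value of \<open>INF\<close>/\<open>SUP\<close> of an unbounded family is involved.\<close>

definition extremal_sub ::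
  "real \<Rightarrow> real \<Rightarrow> ('a \<Rightarrow> 'd::finite heis \<Rightarrow> 'd heis) \<Rightarrow> ('d heis \<Rightarrow> real) \<Rightarrow> bool" where
  "extremal_sub l L b u \<longleftrightarrow> (\<forall>\<phi> x. C2 \<phi> \<longrightarrow> local_max_at (\<lambda>y. u y - \<phi> y) x \<longrightarrow>
     \<not> strict_extremal_super l L b \<phi> x)"

definition uniformly_locally_bounded :: "('a \<Rightarrow> 'b::real_normed_vector \<Rightarrow> 'c::real_normed_vector) \<Rightarrow> bool" where
  "uniformly_locally_bounded b \<longleftrightarrow> (\<forall>r. \<exists>B. \<forall>\<alpha> y. norm y \<le> r \<longrightarrow> norm (b \<alpha> y) \<le> B)"

lemma extremal_sub_if_visc_sub:
  fixes G :: "'d::finite heis \<Rightarrow> real \<Rightarrow> 'd heis \<Rightarrow> 'd hmat \<Rightarrow> real"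
  assumes lL: "l \<le> L"
    and G_ell: "\<And>x r p M. symmetric_mat M \<Longrightarrow> pucci_minus l L M \<le> G x r p M - G x r p 0"
    and G0: "\<And>x r p. (INF \<alpha>. c \<alpha> x * r - b \<alpha> x \<bullet> p) \<le> G x r p 0"
    and sub: "visc_sub G u"
    and cu: "\<And>\<alpha> x. 0 \<le> c \<alpha> x * u x"
  shows "extremal_sub l L b u"
  unfolding extremal_sub_def
proof (intro allI impI notI)
  fix \<phi> x0
  assume C: "C2 \<phi>" and max: "local_max_at (\<lambda>y. u y - \<phi> y) x0"
    and "strict_extremal_super l L b \<phi> x0"
  then obtain m1 m2 where m: "0 < m1 + m2"
    and h1: "\<forall>A\<in>ellipt_set l L. m1 \<le> - trace (A ** hhess \<phi> x0)"
    and h2: "\<forall>\<alpha>. m2 \<le> - (b \<alpha> x0 \<bullet> egrad \<phi> x0)"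
    unfolding strict_extremal_super_def by blast
  define Y where "Y = symmetrize (hhess \<phi> x0)"
  define p where "p = egrad \<phi> x0"
  have "G x0 (u x0) p Y \<le> 0"
    using sub C max unfolding visc_sub_def local_max_at_def Y_def p_def by blast
  moreover have "pucci_minus l L Y \<le> G x0 (u x0) p Y - G x0 (u x0) p 0"
    using G_ell symmetric_mat_symmetrize unfolding Y_def by blast
  moreover have "m1 \<le> pucci_minus l L Y"
    unfolding pucci_minus_def
  proof (rule cINF_greatest[OF ellipt_set_nonempty[OF lL]])
    fix A :: "'d hmat" assume "A \<in> ellipt_set l L"
    then show "m1 \<le> trace (- (A ** Y))"
      using h1 by (simp add: trace_uminus Y_def trace_mult_symmetrize ellipt_set_symmetric)
  qed
  moreover have "m2 \<le> (INF \<alpha>. c \<alpha> x0 * u x0 - b \<alpha> x0 \<bullet> p)"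
  proof (rule cINF_greatest)
    show "m2 \<le> c \<alpha> x0 * u x0 - b \<alpha> x0 \<bullet> p" for \<alpha>
      using h2 cu[of \<alpha> x0] unfolding p_def by (smt (verit))
  qed simp
  ultimately show False using m G0[of x0 "u x0" p] by linarith
qed

lemma extremal_sub_if_visc_super:
  fixes G :: "'d::finite heis \<Rightarrow> real \<Rightarrow> 'd heis \<Rightarrow> 'd hmat \<Rightarrow> real"
  assumes lL: "l \<le> L"
    and G_ell: "\<And>x r p M. symmetric_mat M \<Longrightarrow> G x r p M - G x r p 0 \<le> pucci_plus l L M"
    and G0: "\<And>x r p. G x r p 0 \<le> (SUP \<alpha>. c \<alpha> x * r - b \<alpha> x \<bullet> p)"
    and super: "visc_super G v"
    and cv: "\<And>\<alpha> x. c \<alpha> x * v x \<le> 0"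
  shows "extremal_sub l L b (\<lambda>x. - v x)"
  unfolding extremal_sub_def
proof (intro allI impI notI)
  fix \<phi> x0
  assume C: "C2 \<phi>" and max: "local_max_at (\<lambda>y. - v y - \<phi> y) x0"
    and "strict_extremal_super l L b \<phi> x0"
  then obtain m1 m2 where m: "0 < m1 + m2"
    and h1: "\<forall>A\<in>ellipt_set l L. m1 \<le> - trace (A ** hhess \<phi> x0)"
    and h2: "\<forall>\<alpha>. m2 \<le> - (b \<alpha> x0 \<bullet> egrad \<phi> x0)"
    unfolding strict_extremal_super_def by blast
  define \<psi> where "\<psi> = (\<lambda>y. - \<phi> y)"
  have C': "C2 \<psi>" using C2_cmult[OF C, of "-1"] unfolding \<psi>_def by simp
  define Y where "Y = symmetrize (hhess \<psi> x0)"
  define p where "p = egrad \<psi> x0"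
  have hY: "hhess \<psi> x0 = - hhess \<phi> x0" unfolding \<psi>_def by (rule hhess_uminus[OF C])
  have hp: "p = - egrad \<phi> x0" unfolding p_def \<psi>_def by (rule egrad_uminus[OF C])
  have "0 \<le> G x0 (v x0) p Y"
    using super C' max unfolding visc_super_def local_max_at_def Y_def p_def \<psi>_def
    by (smt (verit, best))
  moreover have "G x0 (v x0) p Y - G x0 (v x0) p 0 \<le> pucci_plus l L Y"
    using G_ell symmetric_mat_symmetrize unfolding Y_def by blast
  moreover have "pucci_plus l L Y \<le> - m1"
    unfolding pucci_plus_def
  proof (rule cSUP_least[OF ellipt_set_nonempty[OF lL]])
    fix A :: "'d hmat" assume A: "A \<in> ellipt_set l L"
    then have "m1 \<le> - trace (A ** hhess \<phi> x0)" using h1 by blast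
    with A show "trace (- (A ** Y)) \<le> - m1"
      by (simp add: trace_uminus Y_def trace_mult_symmetrize hY matrix_mult_uminus_right
          ellipt_set_symmetric)
  qed
  moreover have "(SUP \<alpha>. c \<alpha> x0 * v x0 - b \<alpha> x0 \<bullet> p) \<le> - m2"
  proof (rule cSUP_least)
    show "c \<alpha> x0 * v x0 - b \<alpha> x0 \<bullet> p \<le> - m2" for \<alpha>
      using h2 cv[of \<alpha> x0] unfolding hp by (simp add: inner_minus_right) (smt (verit))
  qed simp
  ultimately show False using m G0[of x0 "v x0" p] by linarith
qed

lemma usc_attains_max:
  assumes u: "usc u" and K: "compact K" "K \<noteq> {}" shows "\<exists>x\<in>K. \<forall>y\<in>K. u y \<le> u x"
proof (rule ccontr)
  assume "\<not> ?thesis"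
  then have "\<forall>x\<in>K. \<exists>y\<in>K. u x < u y" by (auto simp: not_le)
  then obtain f where f: "\<forall>x\<in>K. f x \<in> K \<and> u x < u (f x)" by metis
  have "\<forall>x\<in>K. \<exists>d>0. \<forall>y. dist y x < d \<longrightarrow> u y < u (f x)"
  proof
    fix x assume "x \<in> K"
    then have "u (f x) - u x > 0" using f by auto
    then obtain d where "d > 0" "\<forall>y. dist y x < d \<longrightarrow> u y < u x + (u (f x) - u x)"
      using u unfolding usc_def by blast
    then show "\<exists>d>0. \<forall>y. dist y x < d \<longrightarrow> u y < u (f x)" by auto
  qed
  then obtain d where d: "\<forall>x\<in>K. d x > 0 \<and> (\<forall>y. dist y x < d x \<longrightarrow> u y < u (f x))" by metis
  have cov: "K \<subseteq> \<Union> ((\<lambda>x. ball x (d x)) ` K)" using d by force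
  obtain C where C: "C \<subseteq> K" "finite C" "K \<subseteq> \<Union> ((\<lambda>x. ball x (d x)) ` C)"
    by (rule compactE_image[OF K(1) _ cov]) auto
  have "C \<noteq> {}" using C(3) K(2) by auto
  define m where "m = Max ((\<lambda>x. u (f x)) ` C)"
  have "m \<in> (\<lambda>x. u (f x)) ` C" unfolding m_def using C(2) \<open>C \<noteq> {}\<close> by (intro Max_in) auto
  then obtain x1 where x1: "x1 \<in> C" "u (f x1) = m" by auto
  have "f x1 \<in> K" using f x1 C by auto
  then obtain x where x: "x \<in> C" "f x1 \<in> ball x (d x)" using C(3) by auto
  then have "u (f x1) < u (f x)" using d C(1) by (auto simp: dist_commute)
  moreover have "u (f x) \<le> m" unfolding m_def using C(2) x(1) by (intro Max_ge) auto
  ultimately show False using x1 by simp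
qed

lemma usc_add_continuous:
  fixes u f :: "'a::metric_space \<Rightarrow> real"
  assumes u: "usc u" and f: "continuous_on UNIV f" shows "usc (\<lambda>y. u y + f y)"
  unfolding usc_def
proof (intro allI impI)
  fix x and e :: real assume e: "e > 0"
  obtain d1 where d1: "d1 > 0" "\<forall>y. dist y x < d1 \<longrightarrow> u y < u x + e/2"
    using u e unfolding usc_def by (meson half_gt_zero)
  obtain d2 where d2: "d2 > 0" "\<forall>y. dist y x < d2 \<longrightarrow> dist (f y) (f x) < e/2"
    using f e unfolding continuous_on_iff by (meson UNIV_I half_gt_zero)
  have "u y + f y < u x + f x + e" if "dist y x < min d1 d2" for y
  proof -
    have "u y < u x + e/2" "dist (f y) (f x) < e/2" using d1 d2 that by auto
    then have "u y < u x + e/2" "f y - f x < e/2" by (metis abs_less_iff dist_real_def)+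
    then show ?thesis by linarith
  qed
  then show "\<exists>\<delta>>0. \<forall>y. dist y x < \<delta> \<longrightarrow> u y + f y < u x + f x + e"
    using d1 d2 by (intro exI[of _ "min d1 d2"]) auto
qed

lemma usc_closed_superlevel: assumes "usc u" shows "closed {x. c \<le> u x}"
proof -
  have "open {x. u x < c}"
    unfolding open_dist
  proof (intro ballI)
    fix x assume "x \<in> {x. u x < c}"
    then obtain d where "d > 0" "\<forall>y. dist y x < d \<longrightarrow> u y < u x + (c - u x)"
      using assms unfolding usc_def by (metis diff_gt_0_iff_gt mem_Collect_eq)
    then show "\<exists>e>0. \<forall>y. dist y x < e \<longrightarrow> y \<in> {x. u x < c}" by auto
  qed
  then show ?thesis by (simp add: closed_def Compl_eq not_le[symmetric])
qed

lemma usc_uminus_iff_lsc: "usc (\<lambda>x. - v x) \<longleftrightarrow> lsc v"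
proof -
  have "(- v y < - v x + e) = (v x - e < v y)" for x y and e :: real by linarith
  then show ?thesis unfolding usc_def lsc_def by presburger
qed

lemma usc_interior_local_max:
  assumes f: "usc f" and K: "compact K" "x \<in> K"
    and boundary: "\<And>y. y \<in> K \<Longrightarrow> y \<notin> interior K \<Longrightarrow> f y < f x"
  obtains x0 where "x0 \<in> interior K" "f x \<le> f x0" "local_max_at f x0"
proof -
  obtain x0 where x0: "x0 \<in> K" "\<forall>y\<in>K. f y \<le> f x0" using usc_attains_max[OF f K(1)] K(2) by blast
  have "f x \<le> f x0" using x0 K(2) by blast
  then have int: "x0 \<in> interior K" using boundary x0(1) by (meson not_le)
  then obtain e where e: "e > 0" "ball x0 e \<subseteq> K"
    using mem_interior by blast
  have "local_max_at f x0"
    unfolding local_max_at_def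
  proof (intro exI[of _ e] conjI allI impI)
    fix y assume "dist y x0 < e"
    then have "y \<in> K" using e by (auto simp: dist_commute)
    then show "f y \<le> f x0" using x0 by blast
  qed (rule e)
  with int \<open>f x \<le> f x0\<close> show ?thesis using that by blast
qed

section \<open>Hopf lemma\<close>

lemma paraboloid_facts:
  fixes p :: "'d::finite heis"
  assumes h_def: "h = (\<lambda>y. R^2 - (y - p) \<bullet> (y - p))"
  shows paraboloid_has_derivative: "\<And>y. (h has_derivative (\<lambda>v. -2 * ((y - p) \<bullet> v))) (at y)"
    and C2_paraboloid: "C2 h"
    and Xop_paraboloid: "\<And>j. Xop j h = (\<lambda>y. -2 * ((y - p) \<bullet> hfield j y))"
    and hhess_paraboloid:
      "\<And>x i j. hhess h x $ i $ j = -2 * (hfield i x \<bullet> hfield j x + (x - p) \<bullet> dhfield j (hfield i x))"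
    and egrad_paraboloid: "\<And>y. egrad h y = -2 *\<^sub>R (y - p)"
proof -
  show d: "(h has_derivative (\<lambda>v. -2 * ((y - p) \<bullet> v))) (at y)" for y
    unfolding h_def by (auto intro!: derivative_eq_intros simp: inner_commute)
  have "h = (\<lambda>y. R^2 - norm (id y - p) ^ 2)" unfolding h_def by (simp add: power2_norm_eq_inner)
  then show "C2 h" using C2_diff[OF C2_const C2_norm_diff_power2[OF bounded_linear_ident]] by simp
  show X: "Xop j h = (\<lambda>y. -2 * ((y - p) \<bullet> hfield j y))" for j
    by (rule Xop_has_derivative_fun[OF d])
  have Xd: "((\<lambda>y. -2 * ((y - p) \<bullet> hfield j y)) has_derivative
          (\<lambda>v. -2 * (v \<bullet> hfield j x + (x - p) \<bullet> dhfield j v))) (at x)" for j x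
    by (auto intro!: derivative_eq_intros hfield_has_derivative simp: algebra_simps)
  show "hhess h x $ i $ j = -2 * (hfield i x \<bullet> hfield j x + (x - p) \<bullet> dhfield j (hfield i x))" for x i j
    unfolding hhess_def X using Xop_has_derivative[OF Xd] by simp
  show "egrad h y = -2 *\<^sub>R (y - p)" for y
    by (rule egrad_eqI[OF d]) (simp add: inner_commute)
qed

lemma quadratic_barrier_has_real_derivative:
  "((\<lambda>s. - \<epsilon> * (s + k * s\<^sup>2)) has_real_derivative - \<epsilon> * (1 + 2 * k * t)) (at t)"
  "((\<lambda>s. - \<epsilon> * (1 + 2 * k * s)) has_real_derivative - \<epsilon> * (2 * k)) (at t)"
  by (auto intro!: derivative_eq_intros simp: algebra_simps)

lemma trace_hhess_quadratic_barrier: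
  fixes h :: "'d::finite heis \<Rightarrow> real"
  assumes h: "C2 h"
  shows "- trace (A ** hhess (\<lambda>y. - \<epsilon> * (h y + k * (h y)\<^sup>2)) x)
    = \<epsilon> * (1 + 2 * k * h x) * trace (A ** hhess h x)
      + 2 * \<epsilon> * k * ((\<chi> i. Xop i h x) \<bullet> (A *v (\<chi> i. Xop i h x)))"
proof -
  have H: "hhess (\<lambda>y. - \<epsilon> * (h y + k * (h y)\<^sup>2)) x = (\<chi> i j. - \<epsilon> * (1 + 2 * k * h x) * hhess h x $ i $ j
      + (- \<epsilon> * (2 * k)) * ((\<chi> i. Xop i h x) $ i * (\<chi> i. Xop i h x) $ j))"
    using hhess_compose[OF C2_differentiable[OF h] C2_Xop_differentiable[OF h], of UNIV
        "\<lambda>s. - \<epsilon> * (s + k * s\<^sup>2)" "\<lambda>s. - \<epsilon> * (1 + 2 * k * s)" "\<lambda>_. - \<epsilon> * (2 * k)"]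
      quadratic_barrier_has_real_derivative by simp
  show ?thesis unfolding H trace_mult_combination by (simp add: algebra_simps)
qed

lemma egrad_quadratic_barrier:
  fixes h :: "'d::finite heis \<Rightarrow> real"
  assumes h: "C2 h"
  shows "egrad (\<lambda>y. - \<epsilon> * (h y + k * (h y)\<^sup>2)) x = (- \<epsilon> * (1 + 2 * k * h x)) *\<^sub>R egrad h x"
proof (rule egrad_eqI)
  have hd: "(h has_derivative frechet_derivative h (at x)) (at x)"
    using C2_differentiable[OF h] frechet_derivative_works by blast
  then show "((\<lambda>y. - \<epsilon> * (h y + k * (h y)\<^sup>2)) has_derivative
      (\<lambda>v. frechet_derivative h (at x) v * (- \<epsilon> * (1 + 2 * k * h x)))) (at x)"
    by (rule DERIV_compose_FDERIV[OF quadratic_barrier_has_real_derivative(1)])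
  show "frechet_derivative h (at x) v * (- \<epsilon> * (1 + 2 * k * h x))
      = ((- \<epsilon> * (1 + 2 * k * h x)) *\<^sub>R egrad h x) \<bullet> v" for v
    using egrad_inner[OF hd] by (simp add: inner_commute)
qed

text \<open>The classical Hopf barrier \<open>-\<epsilon> (h + k h\<^sup>2)\<close>: its Hessian contains the term
  \<open>2 \<epsilon> k \<nabla>\<^sub>H h \<otimes> \<nabla>\<^sub>H h\<close>, which dominates everything else once \<open>k\<close> is large,
  provided the horizontal gradient of \<open>h\<close> does not vanish.\<close>

lemma strict_extremal_super_quadratic_barrier:
  fixes h :: "'d::finite heis \<Rightarrow> real"
  assumes h: "C2 h" and lL: "0 < l" "l \<le> L" and \<epsilon>: "0 < \<epsilon>" and k: "0 < k" "\<bar>k * h x\<bar> \<le> 1/2"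
    and grad: "\<delta> \<le> (\<Sum>j\<in>UNIV. (Xop j h x)\<^sup>2)"
    and hess: "(\<Sum>i\<in>UNIV. \<Sum>j\<in>UNIV. \<bar>hhess h x $ i $ j\<bar>) \<le> CS"
    and b: "\<And>\<alpha>. norm (b \<alpha> x) \<le> B" and eg: "norm (egrad h x) \<le> CD"
    and big: "L * CS + B * CD < k * l * \<delta>"
  shows "strict_extremal_super l L b (\<lambda>y. - \<epsilon> * (h y + k * (h y)\<^sup>2)) x"
proof -
  define c where "c = 1 + 2 * k * h x"
  have c: "0 \<le> c" "c \<le> 2" unfolding c_def using k by (auto simp: abs_le_iff)
  define gv where "gv = (\<chi> i. Xop i h x)"
  have "norm gv ^ 2 = (\<Sum>j\<in>UNIV. (Xop j h x)\<^sup>2)"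
    unfolding gv_def by (simp only: power2_norm_eq_inner) (simp add: inner_vec_def power2_eq_square)
  then have gv: "l * \<delta> \<le> l * norm gv ^ 2" using grad lL by (intro mult_left_mono) auto
  have "\<forall>A\<in>ellipt_set l L.
      2 * \<epsilon> * (k * l * \<delta> - L * CS) \<le> - trace (A ** hhess (\<lambda>y. - \<epsilon> * (h y + k * (h y)\<^sup>2)) x)"
  proof
    fix A :: "'d hmat" assume A: "A \<in> ellipt_set l L"
    have "\<bar>trace (A ** hhess h x)\<bar> \<le> L * (\<Sum>i\<in>UNIV. \<Sum>j\<in>UNIV. \<bar>hhess h x $ i $ j\<bar>)"
      using ellipt_set_trace_bound[OF A] lL by simp
    also have "\<dots> \<le> L * CS" using hess lL by (intro mult_left_mono) auto
    finally have "\<bar>trace (A ** hhess h x)\<bar> \<le> L * CS" .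
    then have "c * \<bar>trace (A ** hhess h x)\<bar> \<le> 2 * (L * CS)" using c by (intro mult_mono) auto
    moreover have "c * - \<bar>trace (A ** hhess h x)\<bar> \<le> c * trace (A ** hhess h x)"
      using c(1) by (intro mult_left_mono) auto
    ultimately have "- 2 * (L * CS) \<le> c * trace (A ** hhess h x)" by simp
    moreover have "l * \<delta> \<le> gv \<bullet> (A *v gv)" using ellipt_set_lower[OF A, of gv] gv by linarith
    ultimately have "\<epsilon> * (- 2 * (L * CS)) + 2 * \<epsilon> * k * (l * \<delta>)
        \<le> \<epsilon> * (c * trace (A ** hhess h x)) + 2 * \<epsilon> * k * (gv \<bullet> (A *v gv))"
      using \<epsilon> k by (intro add_mono mult_left_mono) auto
    then show "2 * \<epsilon> * (k * l * \<delta> - L * CS)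
        \<le> - trace (A ** hhess (\<lambda>y. - \<epsilon> * (h y + k * (h y)\<^sup>2)) x)"
      unfolding trace_hhess_quadratic_barrier[OF h] gv_def c_def by (simp add: algebra_simps)
  qed
  moreover have "\<forall>\<alpha>. - 2 * \<epsilon> * B * CD \<le> - (b \<alpha> x \<bullet> egrad (\<lambda>y. - \<epsilon> * (h y + k * (h y)\<^sup>2)) x)"
  proof
    fix \<alpha>
    have "norm (egrad (\<lambda>y. - \<epsilon> * (h y + k * (h y)\<^sup>2)) x) \<le> (\<epsilon> * 2) * CD"
      unfolding egrad_quadratic_barrier[OF h] using c \<epsilon> eg
      by (simp add: abs_mult c_def[symmetric] mult_mono)
    then have "\<bar>b \<alpha> x \<bullet> egrad (\<lambda>y. - \<epsilon> * (h y + k * (h y)\<^sup>2)) x\<bar> \<le> B * (\<epsilon> * 2 * CD)"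
      using Cauchy_Schwarz_ineq2 b[of \<alpha>]
      by (meson mult_mono norm_ge_zero order_trans)
    then show "- 2 * \<epsilon> * B * CD \<le> - (b \<alpha> x \<bullet> egrad (\<lambda>y. - \<epsilon> * (h y + k * (h y)\<^sup>2)) x)"
      by (simp add: abs_le_iff algebra_simps)
  qed
  moreover have "0 < 2 * \<epsilon> * (k * l * \<delta> - L * CS - B * CD)"
    using big \<epsilon> by (intro mult_pos_pos) auto
  then have "0 < 2 * \<epsilon> * (k * l * \<delta> - L * CS) + - 2 * \<epsilon> * B * CD"
    by (simp add: algebra_simps)
  ultimately show ?thesis
    unfolding strict_extremal_super_def by blast
qed

lemma continuous_on_near:
  fixes f :: "'a::metric_space \<Rightarrow> real"
  assumes "continuous_on UNIV f" "0 < e"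
  shows "\<exists>r>0. \<forall>y. dist y z \<le> r \<longrightarrow> \<bar>f y - f z\<bar> < e"
proof -
  obtain r where "0 < r" "\<forall>y. dist y z < r \<longrightarrow> dist (f y) (f z) < e"
    using assms unfolding continuous_on_iff by (meson UNIV_I)
  then show ?thesis by (intro exI[of _ "r / 2"]) (auto simp: dist_real_def)
qed

lemma hopf_barrier_near:
  fixes p z :: "'d::finite heis"
  assumes h_def: "h = (\<lambda>y. R^2 - (y - p) \<bullet> (y - p))" and dz: "dist z p = R"
    and lL: "0 < l" "l \<le> L" and nz: "(z - p) \<bullet> hfield j0 z \<noteq> 0"
    and bb: "uniformly_locally_bounded b"
  obtains k r where "0 < k" "0 < r" "\<And>x. dist x z \<le> r \<Longrightarrow> \<bar>k * h x\<bar> \<le> 1/2"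
    "\<And>x \<epsilon>. dist x z \<le> r \<Longrightarrow> 0 < \<epsilon> \<Longrightarrow>
       strict_extremal_super l L b (\<lambda>y. - \<epsilon> * (h y + k * (h y)\<^sup>2)) x"
proof -
  note h = paraboloid_facts[OF h_def]
  define ng where "ng = (\<lambda>y. \<Sum>j\<in>UNIV. (Xop j h y)\<^sup>2)"
  have "(Xop j0 h z)\<^sup>2 \<le> ng z" unfolding ng_def by (rule member_le_sum) auto
  moreover have "0 < (Xop j0 h z)\<^sup>2" using nz by (simp add: h(3))
  ultimately have \<delta>: "0 < ng z" by linarith
  have "continuous_on UNIV ng" unfolding ng_def h(3) by (intro continuous_intros)
  moreover have "0 < ng z / 2" using \<delta> by simp
  ultimately obtain r where r: "0 < r" "\<And>y. dist y z \<le> r \<Longrightarrow> \<bar>ng y - ng z\<bar> < ng z / 2"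
    using continuous_on_near by blast
  define Ss where "Ss = (\<lambda>y. \<Sum>i\<in>UNIV. \<Sum>j\<in>UNIV. \<bar>hhess h y $ i $ j\<bar>)"
  have "continuous_on UNIV Ss" unfolding Ss_def h(4) by (intro continuous_intros)
  then obtain CS where CS: "0 \<le> CS" "\<And>y. y \<in> cball z r \<Longrightarrow> norm (Ss y) \<le> CS"
    using continuous_on_compact_bound[OF compact_cball continuous_on_subset[OF _ subset_UNIV]] by blast
  obtain B where B: "\<forall>\<alpha> y. norm y \<le> norm z + r \<longrightarrow> norm (b \<alpha> y) \<le> B"
    using bb unfolding uniformly_locally_bounded_def by blast
  have "norm (b undefined z) \<le> B" using B r by simp
  then have B0: "0 \<le> B" by (rule order_trans[OF norm_ge_zero])
  define CD where "CD = 2 * (r + R)"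
  define k where "k = (2 * (L * CS + B * CD) + 1) / (l * ng z)"
  have "0 \<le> L * CS + B * CD"
    using lL CS B0 r dz unfolding CD_def by (intro add_nonneg_nonneg mult_nonneg_nonneg) auto
  then have k: "0 < k" using lL \<delta> unfolding k_def by (intro divide_pos_pos) auto
  have "continuous_on UNIV h"
    using h(1) by (meson continuous_at_imp_continuous_on has_derivative_continuous)
  moreover have "0 < 1 / (2 * k)" using k by simp
  ultimately obtain r' where r': "0 < r'" "\<And>y. dist y z \<le> r' \<Longrightarrow> \<bar>h y - h z\<bar> < 1 / (2 * k)"
    using continuous_on_near by blast
  have hz: "h z = 0" using dz unfolding h_def by (simp add: dist_norm power2_norm_eq_inner[symmetric])
  show ?thesis
  proof (rule that[OF k, of "min r r'"])
    show "0 < min r r'" using r r' by simp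
    show small: "\<bar>k * h x\<bar> \<le> 1/2" if "dist x z \<le> min r r'" for x
      using r'(2)[of x] that k hz by (simp add: abs_mult field_simps)
    fix x and \<epsilon> :: real assume x: "dist x z \<le> min r r'" and \<epsilon>: "0 < \<epsilon>"
    show "strict_extremal_super l L b (\<lambda>y. - \<epsilon> * (h y + k * (h y)\<^sup>2)) x"
    proof (rule strict_extremal_super_quadratic_barrier[OF h(2) lL \<epsilon> k small[OF x]])
      show "ng z / 2 \<le> (\<Sum>j\<in>UNIV. (Xop j h x)\<^sup>2)" using r(2)[of x] x unfolding ng_def by linarith
      show "(\<Sum>i\<in>UNIV. \<Sum>j\<in>UNIV. \<bar>hhess h x $ i $ j\<bar>) \<le> CS"
        using CS(2)[of x] x unfolding Ss_def by (simp add: dist_commute)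
      show "norm (b \<alpha> x) \<le> B" for \<alpha>
        using B x norm_triangle_ineq[of "x - z" z] by (simp add: dist_norm)
      show "norm (egrad h x) \<le> CD"
        using x dz norm_triangle_ineq[of "x - z" "z - p"] unfolding h(5) CD_def by (simp add: dist_norm)
      show "L * CS + B * CD < k * l * (ng z / 2)"
        unfolding k_def using lL \<delta> by (simp add: field_simps)
    qed
  qed
qed

lemma quadratic_barrier_bounds:
  fixes s :: real assumes k: "0 < k" and s: "\<bar>k * s\<bar> \<le> 1/2" and \<epsilon>: "0 \<le> \<epsilon>"
  shows "\<epsilon> * (s + k * s\<^sup>2) \<le> 3 * \<epsilon> / (4 * k)" and "s < 0 \<Longrightarrow> 0 < \<epsilon> \<Longrightarrow> \<epsilon> * (s + k * s\<^sup>2) < 0"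
proof -
  have eq: "\<epsilon> * (s + k * s\<^sup>2) = \<epsilon> / k * ((k * s) * (1 + k * s))"
    using k by (simp add: field_simps power2_eq_square)
  have "\<bar>k * s\<bar> * \<bar>k * s\<bar> \<le> 1/2 * (1/2)" using s by (intro mult_mono) auto
  then have "(k * s) * (1 + k * s) \<le> 3/4" using s by (simp add: algebra_simps abs_mult_self_eq)
  then show "\<epsilon> * (s + k * s\<^sup>2) \<le> 3 * \<epsilon> / (4 * k)"
    unfolding eq using k \<epsilon> mult_left_mono[of "(k * s) * (1 + k * s)" "3/4" "\<epsilon> / k"] by simp
  assume "s < 0" "0 < \<epsilon>"
  moreover have "k * s < 0" using k \<open>s < 0\<close> by (simp add: mult_pos_neg)
  moreover have "0 < 1 + k * s" using s by (simp add: abs_le_iff)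
  ultimately have "(k * s) * (1 + k * s) < 0" by (simp add: mult_neg_pos)
  then show "\<epsilon> * (s + k * s\<^sup>2) < 0" unfolding eq by (rule mult_pos_neg[rotated]) (use \<open>0 < \<epsilon>\<close> k in simp)
qed

lemma usc_compact_gap:
  assumes u: "usc u" and K: "compact K" and less: "\<And>y. y \<in> K \<Longrightarrow> u y < M"
  obtains \<eta> where "0 < \<eta>" "\<And>y. y \<in> K \<Longrightarrow> u y \<le> M - \<eta>"
proof (cases "K = {}")
  case False
  then obtain y0 where "y0 \<in> K" "\<forall>y\<in>K. u y \<le> u y0" using usc_attains_max[OF u K] by blast
  then show ?thesis using that[of "M - u y0"] less by simp
qed (use that[of 1] in simp)

lemma hopf_horizontal_normal:
  fixes u :: "'d::finite heis \<Rightarrow> real"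
  assumes lL: "0 < l" "l \<le> L" and sub: "extremal_sub l L b u" and u: "usc u"
    and le: "\<And>x. u x \<le> M" and uz: "u z = M" and dz: "dist z p = R"
    and less: "\<And>x. dist x p \<le> R \<Longrightarrow> x \<noteq> z \<Longrightarrow> u x < M"
    and bb: "uniformly_locally_bounded b"
  shows "(z - p) \<bullet> hfield j z = 0"
proof (rule ccontr)
  assume nz: "(z - p) \<bullet> hfield j z \<noteq> 0"
  define h where "h = (\<lambda>y::'d heis. R^2 - (y - p) \<bullet> (y - p))"
  obtain k r where k: "0 < k" and r: "0 < r" and small: "\<And>x. dist x z \<le> r \<Longrightarrow> \<bar>k * h x\<bar> \<le> 1/2"
    and barrier: "\<And>x \<epsilon>. dist x z \<le> r \<Longrightarrow> 0 < \<epsilon> \<Longrightarrow>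
      strict_extremal_super l L b (\<lambda>y. - \<epsilon> * (h y + k * (h y)\<^sup>2)) x"
    using hopf_barrier_near[OF h_def dz lL nz bb] by blast
  define K where "K = sphere z r \<inter> cball p R"
  have "compact K" unfolding K_def by (intro compact_Int_closed compact_sphere closed_cball)
  then obtain \<eta> where \<eta>: "0 < \<eta>" "\<And>y. y \<in> K \<Longrightarrow> u y \<le> M - \<eta>"
    by (rule usc_compact_gap[OF u]) (use less r in \<open>auto simp: K_def dist_commute\<close>)
  define \<epsilon> where "\<epsilon> = \<eta> * k / 2"
  have \<epsilon>: "0 < \<epsilon>" using \<eta> k by (simp add: \<epsilon>_def)
  define \<phi> where "\<phi> = (\<lambda>y. - \<epsilon> * (h y + k * (h y)\<^sup>2))"
  have boundary: "u y - \<phi> y < u z - \<phi> z" if y: "dist z y = r" for y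
  proof -
    have small_y: "\<bar>k * h y\<bar> \<le> 1/2" using small y by (simp add: dist_commute)
    have "h z = 0" using dz unfolding h_def by (simp add: dist_norm power2_norm_eq_inner[symmetric])
    then have "u z - \<phi> z = M" using uz unfolding \<phi>_def by simp
    moreover have "u y - \<phi> y < M"
    proof (cases "dist y p \<le> R")
      case True
      then have "u y \<le> M - \<eta>" using \<eta>(2) y unfolding K_def by (simp add: dist_commute)
      moreover have "- \<phi> y \<le> 3 * \<epsilon> / (4 * k)"
        unfolding \<phi>_def using quadratic_barrier_bounds(1)[OF k small_y] \<epsilon> by simp
      ultimately show ?thesis using \<eta> k unfolding \<epsilon>_def by simp
    next
      case False
      moreover have "0 \<le> R" using dz zero_le_dist by metis
      ultimately have "h y < 0" unfolding h_def
        by (simp add: dist_norm power2_norm_eq_inner[symmetric] power_strict_mono)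
      then have "- \<phi> y < 0" unfolding \<phi>_def using quadratic_barrier_bounds(2)[OF k small_y] \<epsilon> by simp
      then show ?thesis using le[of y] by simp
    qed
    ultimately show ?thesis by simp
  qed
  have "continuous_on UNIV h"
    using paraboloid_facts(1)[OF h_def] by (meson continuous_at_imp_continuous_on has_derivative_continuous)
  then have "continuous_on UNIV (\<lambda>y. - \<phi> y)" unfolding \<phi>_def by (intro continuous_intros)
  from usc_add_continuous[OF u this] have "usc (\<lambda>y. u y - \<phi> y)" by simp
  then obtain x0 where x0: "x0 \<in> ball z r" "local_max_at (\<lambda>y. u y - \<phi> y) x0"
    by (rule usc_interior_local_max[of _ "cball z r" z]) (use r boundary in auto)
  have "C2 \<phi>" unfolding \<phi>_def
    by (rule C2_compose[OF paraboloid_facts(2)[OF h_def] open_UNIV])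
      (use quadratic_barrier_has_real_derivative[of \<epsilon> k] in auto)
  moreover have "strict_extremal_super l L b \<phi> x0"
    unfolding \<phi>_def using x0(1) \<epsilon> by (intro barrier) (auto simp: dist_commute)
  ultimately show False using sub x0(2) unfolding extremal_sub_def by blast
qed

section \<open>Strong maximum principle\<close>

text \<open>\<open>hvec va vb x = \<Sum>\<^sub>k va\<^sub>k X\<^sub>k(x) + vb\<^sub>k X\<^sub>d\<^sub>+\<^sub>k(x)\<close>. Its vertical component
  is affine in \<open>x\<close> and constant along the field itself, so its integral curves are the
  straight lines \<open>s \<mapsto> x + s hvec va vb x\<close>.\<close>

definition hvec :: "real^'d::finite \<Rightarrow> real^'d \<Rightarrow> 'd heis \<Rightarrow> 'd heis" where
  "hvec va vb x = (va, vb, 2 * (fst (snd x) \<bullet> va - fst x \<bullet> vb))"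

lemma hvec_translate: "hvec va vb (x + s *\<^sub>R hvec va vb x) = hvec va vb x"
  by (simp add: hvec_def inner_add_left inner_commute algebra_simps)

lemma inner_hvec:
  "\<nu> \<bullet> hvec va vb z
    = (\<Sum>k\<in>UNIV. va$k * (\<nu> \<bullet> hfield (Inl k) z) + vb$k * (\<nu> \<bullet> hfield (Inr k) z))"
proof -
  obtain a b t where z: "z = (a, b, t)" by (metis prod.collapse)
  obtain na nb nt where n: "\<nu> = (na, nb, nt)" by (metis prod.collapse)
  show ?thesis unfolding z n hvec_def
    by (simp add: inner_prod_def inner_axis)
      (simp add: inner_vec_def sum.distrib sum_distrib_left sum_subtractf algebra_simps)
qed

lemma inner_hvec_diff_le:
  "(y - z) \<bullet> (hvec va vb y - hvec va vb z) \<le> 2 * (norm va + norm vb) * norm (y - z) ^ 2"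
proof -
  obtain a b t where \<nu>: "y - z = (a, b, t)" by (metis prod.collapse)
  have "norm (b, t) \<le> norm (a, b, t)" "norm b \<le> norm (b, t)" "norm t \<le> norm (b, t)"
    by (rule norm_snd_le norm_fst_le)+
  then have n: "norm a \<le> norm (y - z)" "norm b \<le> norm (y - z)" "\<bar>t\<bar> \<le> norm (y - z)"
    unfolding \<nu> using norm_fst_le[where x=a and y="(b, t)"] by auto
  have e: "(y - z) \<bullet> (hvec va vb y - hvec va vb z) = 2 * t * (b \<bullet> va - a \<bullet> vb)"
    using \<nu> unfolding hvec_def
    by (cases y, cases z) (simp add: inner_prod_def inner_diff_left algebra_simps)
  have "\<bar>b \<bullet> va\<bar> \<le> norm (y - z) * norm va" "\<bar>a \<bullet> vb\<bar> \<le> norm (y - z) * norm vb"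
    using Cauchy_Schwarz_ineq2[of b va] Cauchy_Schwarz_ineq2[of a vb] n
    by (meson mult_right_mono norm_ge_zero order_trans)+
  then have "\<bar>b \<bullet> va - a \<bullet> vb\<bar> \<le> norm (y - z) * (norm va + norm vb)"
    by (simp add: distrib_left abs_diff_le_iff) linarith
  then have "\<bar>t\<bar> * \<bar>b \<bullet> va - a \<bullet> vb\<bar> \<le> norm (y - z) * (norm (y - z) * (norm va + norm vb))"
    using n(3) by (intro mult_mono) auto
  then have "t * (b \<bullet> va - a \<bullet> vb) \<le> norm (y - z) * (norm (y - z) * (norm va + norm vb))"
    using abs_ge_self[of "t * (b \<bullet> va - a \<bullet> vb)"] by (simp add: abs_mult)
  then show ?thesis unfolding e by (simp add: power2_eq_square algebra_simps)
qed

definition horizontally_normal :: "'d::finite heis set \<Rightarrow> bool" where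
  "horizontally_normal F \<longleftrightarrow>
     (\<forall>y z j. z \<in> F \<longrightarrow> infdist y F = dist y z \<longrightarrow> (y - z) \<bullet> hfield j z = 0)"

lemma infdist_hvec_step:
  assumes F: "closed F" "F \<noteq> {}" "horizontally_normal F" and h: "0 \<le> h"
  shows "infdist (y + h *\<^sub>R hvec va vb y) F ^ 2
    \<le> infdist y F ^ 2 * (1 + 4 * (norm va + norm vb) * h) + h^2 * norm (hvec va vb y) ^ 2"
proof -
  obtain z where z: "z \<in> F" "infdist y F = dist y z" using infdist_attains_inf[OF F(1,2)] by blast
  have "(y - z) \<bullet> hvec va vb z = 0"
    using F(3) z unfolding horizontally_normal_def by (simp add: inner_hvec)
  then have "(y - z) \<bullet> hvec va vb y \<le> 2 * (norm va + norm vb) * dist y z ^ 2"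
    using inner_hvec_diff_le[of y z va vb] by (simp add: inner_diff_right dist_norm)
  then have ip: "2 * h * ((y - z) \<bullet> hvec va vb y) \<le> 2 * h * (2 * (norm va + norm vb) * dist y z ^ 2)"
    using h by (intro mult_left_mono) auto
  have "infdist (y + h *\<^sub>R hvec va vb y) F ^ 2 \<le> norm ((y - z) + h *\<^sub>R hvec va vb y) ^ 2"
    using infdist_le[OF z(1)] by (intro power_mono) (auto simp: dist_norm algebra_simps infdist_nonneg)
  also have "\<dots> = dist y z ^ 2 + 2 * h * ((y - z) \<bullet> hvec va vb y) + h^2 * norm (hvec va vb y) ^ 2"
    unfolding dist_norm power2_norm_eq_inner
    by (simp add: inner_add_left inner_add_right inner_commute power2_eq_square algebra_simps)
  also have "\<dots> \<le> dist y z ^ 2 * (1 + 4 * (norm va + norm vb) * h) + h^2 * norm (hvec va vb y) ^ 2"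
    using ip by (simp add: algebra_simps)
  finally show ?thesis unfolding z(2) .
qed

lemma infdist_hvec_iterate:
  fixes va vb :: "real^'d::finite"
  assumes F: "closed F" "F \<noteq> {}" "horizontally_normal F" and x: "x \<in> F" and h: "0 \<le> h"
  defines "C \<equiv> 4 * (norm va + norm vb)" and "C' \<equiv> norm (hvec va vb x) ^ 2"
  shows "infdist (x + (real n * h) *\<^sub>R hvec va vb x) F ^ 2 \<le> C' * h^2 * real n * (1 + C * h) ^ n"
proof (induction n)
  case 0
  show ?case using x by (simp add: infdist_zero)
next
  case (Suc n)
  define y where "y = x + (real n * h) *\<^sub>R hvec va vb x"
  have hy: "hvec va vb y = hvec va vb x" unfolding y_def by (rule hvec_translate)
  have C: "0 \<le> C" "0 \<le> C'" by (simp_all add: C_def C'_def)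
  have C1: "1 \<le> (1 + C * h) ^ Suc n" using h C by (intro one_le_power) simp
  have "x + (real (Suc n) * h) *\<^sub>R hvec va vb x = y + h *\<^sub>R hvec va vb x"
    unfolding y_def by (simp add: algebra_simps)
  then have "x + (real (Suc n) * h) *\<^sub>R hvec va vb x = y + h *\<^sub>R hvec va vb y"
    by (simp only: hy)
  then have "infdist (x + (real (Suc n) * h) *\<^sub>R hvec va vb x) F ^ 2
      \<le> infdist y F ^ 2 * (1 + C * h) + h^2 * C'"
    using infdist_hvec_step[OF F h, of y va vb] unfolding hy C_def C'_def by (simp add: mult.assoc)
  also have "\<dots> \<le> (C' * h^2 * real n * (1 + C * h) ^ n) * (1 + C * h) + h^2 * C' * (1 + C * h) ^ Suc n"
  proof (rule add_mono)
    show "infdist y F ^ 2 * (1 + C * h) \<le> (C' * h^2 * real n * (1 + C * h) ^ n) * (1 + C * h)"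
      using Suc.IH C h unfolding y_def by (intro mult_right_mono) auto
    show "h^2 * C' \<le> h^2 * C' * (1 + C * h) ^ Suc n"
      using mult_left_mono[OF C1, of "h^2 * C'"] C by simp
  qed
  also have "\<dots> = C' * h^2 * real (Suc n) * (1 + C * h) ^ Suc n" by (simp add: algebra_simps)
  finally show ?case .
qed

lemma horizontally_normal_hvec_closed:
  assumes F: "closed F" "F \<noteq> {}" "horizontally_normal F" and x: "x \<in> F"
  shows "x + hvec va vb x \<in> F"
proof -
  define C where "C = 4 * (norm va + norm vb)"
  define C' where "C' = norm (hvec va vb x) ^ 2"
  define g where "g = infdist (x + hvec va vb x) F ^ 2"
  have C: "0 \<le> C" "0 \<le> C'" unfolding C_def C'_def by auto
  have g: "g \<le> C' * exp C / real n" if n: "n > 0" for n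
  proof -
    have "0 \<le> 1 / real n" by simp
    from infdist_hvec_iterate[OF F x this, where va=va and vb=vb and n=n]
    have "g \<le> C' * (1 / real n)^2 * real n * (1 + C * (1 / real n)) ^ n"
      using n unfolding g_def C_def C'_def by simp
    also have "\<dots> = C' / real n * (1 + C / real n) ^ n"
      using n by (simp add: power2_eq_square field_simps)
    also have "\<dots> \<le> C' / real n * exp (C / real n) ^ n"
      using C by (intro mult_left_mono power_mono) auto
    also have "\<dots> = C' * exp C / real n"
      using n by (simp add: exp_of_nat_mult[symmetric])
    finally show ?thesis .
  qed
  have "g \<le> 0"
  proof (rule ccontr)
    assume "\<not> g \<le> 0"
    then have g0: "0 < g" by simp
    obtain n :: nat where n: "C' * exp C / g < n" using reals_Archimedean2 by blast
    moreover have "0 \<le> C' * exp C / g" using C g0 by simp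
    ultimately have "0 < n" by linarith
    moreover have "C' * exp C < n * g" using n g0 by (simp add: pos_divide_less_eq)
    ultimately show False using g[of n] by (simp add: pos_le_divide_eq mult.commute)
  qed
  then have "infdist (x + hvec va vb x) F = 0" unfolding g_def using infdist_nonneg by simp
  then show ?thesis using in_closed_iff_infdist_zero[OF F(1,2)] by blast
qed

text \<open>The four horizontal moves \<open>\<pm>w\<close>, \<open>\<pm>w'\<close> close up horizontally but produce the vertical
  displacement \<open>-4 w \<bullet> w'\<close>: this is how the commutator \<open>[X\<^sub>k, X\<^sub>d\<^sub>+\<^sub>k]\<close> is reached.\<close>

lemma hvec_closed_eq_UNIV:
  fixes F :: "'d::finite heis set"
  assumes closed: "\<And>x va vb. x \<in> F \<Longrightarrow> x + hvec va vb x \<in> F" and x0: "x0 \<in> F"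
  shows "x \<in> F"
proof -
  obtain a b t where x0_def: "x0 = (a, b, t)" by (metis prod.collapse)
  obtain a' b' t' where x_def: "x = (a', b', t')" by (metis prod.collapse)
  define x1 where "x1 = x0 + hvec (a' - a) (b' - b) x0"
  define t1 where "t1 = snd (snd x1)"
  have x1: "x1 \<in> F" "x1 = (a', b', t1)"
    unfolding x1_def using closed x0 by (blast, simp add: t1_def x1_def x0_def hvec_def)
  define w :: "real^'d" where "w = axis undefined 1"
  define w' where "w' = (- (t' - t1) / 4) *\<^sub>R w"
  define p1 where "p1 = x1 + hvec w 0 x1"
  define p2 where "p2 = p1 + hvec 0 w' p1"
  define p3 where "p3 = p2 + hvec (- w) 0 p2"
  have "p3 + hvec 0 (- w') p3 \<in> F" unfolding p3_def p2_def p1_def by (intro closed x1(1))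
  moreover have "p3 + hvec 0 (- w') p3 = x"
    unfolding p3_def p2_def p1_def x1(2) x_def hvec_def w'_def
    by (simp add: inner_add_left inner_add_right inner_commute w_def inner_axis_axis algebra_simps)
      (simp add: field_simps)
  ultimately show ?thesis by simp
qed

lemma dist_less_if_in_midpoint_cball:
  fixes q z x :: "'a::real_inner"
  assumes x: "dist x (midpoint q z) \<le> dist q z / 2" "x \<noteq> z"
  shows "dist x q < dist q z"
proof -
  define p where "p = midpoint q z"
  have eq: "x - q = (x - p) + (z - p)" "x - z = (x - p) - (z - p)"
    unfolding p_def midpoint_def by (simp_all add: algebra_simps) (simp add: scaleR_add_left[symmetric])
  have par: "norm (x - q) ^ 2 + norm (x - z) ^ 2 = 2 * norm (x - p) ^ 2 + 2 * norm (z - p) ^ 2"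
    unfolding eq
    by (simp add: power2_norm_eq_inner inner_add_left inner_add_right inner_diff_left
        inner_diff_right inner_commute)
  have "norm (x - p) ^ 2 \<le> (dist q z / 2)^2" using x(1) unfolding p_def by (simp add: dist_norm power_mono)
  moreover have "norm (z - p) = dist q z / 2"
    unfolding p_def using dist_midpoint(4)[of q z] by (simp add: dist_norm norm_minus_commute)
  then have "norm (z - p) ^ 2 = (dist q z / 2)^2" by (simp only:)
  moreover have "0 < norm (x - z) ^ 2" using x(2) by simp
  ultimately have "norm (x - q) ^ 2 < 4 * (dist q z / 2)^2" using par by linarith
  then have "norm (x - q) ^ 2 < (dist q z) ^ 2" by (simp add: power2_eq_square)
  then show ?thesis by (simp add: dist_norm power_less_imp_less_base)
qed

lemma horizontally_normal_superlevel:
  fixes u :: "'d::finite heis \<Rightarrow> real"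
  assumes lL: "0 < l" "l \<le> L" and sub: "extremal_sub l L b u" and u: "usc u"
    and le: "\<And>x. u x \<le> M" and bb: "uniformly_locally_bounded b"
  shows "horizontally_normal {x. M \<le> u x}"
  unfolding horizontally_normal_def
proof (intro allI impI)
  fix q z j
  assume z: "z \<in> {x. M \<le> u x}" and near: "infdist q {x. M \<le> u x} = dist q z"
  have "u x < M" if x: "dist x (midpoint q z) \<le> dist q z / 2" "x \<noteq> z" for x
  proof (rule ccontr)
    assume "\<not> u x < M"
    then have "dist q z \<le> dist q x" using near infdist_le[of x "{x. M \<le> u x}" q] by simp
    then show False using dist_less_if_in_midpoint_cball[OF x] by (simp add: dist_commute)
  qed
  moreover have "u z = M" using z le by (simp add: order_antisym)
  moreover have "dist z (midpoint q z) = dist q z / 2" by (simp add: dist_midpoint)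
  ultimately have "(z - midpoint q z) \<bullet> hfield j z = 0"
    using hopf_horizontal_normal[OF lL sub u le] bb by blast
  moreover have "z - midpoint q z = (1/2) *\<^sub>R (z - q)"
    unfolding midpoint_def by (simp add: algebra_simps) (simp add: scaleR_add_left[symmetric])
  ultimately show "(q - z) \<bullet> hfield j z = 0"
    by (simp add: inner_commute inner_diff_left inner_diff_right)
qed

theorem strong_maximum_principle:
  fixes u :: "'d::finite heis \<Rightarrow> real"
  assumes lL: "0 < l" "l \<le> L" and sub: "extremal_sub l L b u" and u: "usc u"
    and le: "\<And>x. u x \<le> M" and max: "u x0 = M" and bb: "uniformly_locally_bounded b"
  shows "u x = M"
proof -
  let ?F = "{x. M \<le> u x}"
  have F: "closed ?F" "?F \<noteq> {}" "horizontally_normal ?F"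
    using usc_closed_superlevel[OF u] max horizontally_normal_superlevel[OF lL sub u le bb] by auto
  have "x \<in> ?F"
    by (rule hvec_closed_eq_UNIV[OF horizontally_normal_hvec_closed[OF F]]) (use max in auto)
  then show ?thesis using le[of x] by simp
qed

section \<open>A Lyapunov function\<close>

definition hsq :: "'d::finite heis \<Rightarrow> real" where
  "hsq x = fst x \<bullet> fst x + fst (snd x) \<bullet> fst (snd x)"
definition hquart :: "'d::finite heis \<Rightarrow> real" where
  "hquart x = hsq x * hsq x + snd (snd x) * snd (snd x)"
definition hsq_deriv :: "'d::finite heis \<Rightarrow> 'd heis \<Rightarrow> real" where
  "hsq_deriv x v = 2 * (fst x \<bullet> fst v) + 2 * (fst (snd x) \<bullet> fst (snd v))"
definition hquart_deriv :: "'d::finite heis \<Rightarrow> 'd heis \<Rightarrow> real" where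
  "hquart_deriv x v = 2 * hsq x * hsq_deriv x v + 2 * snd (snd x) * snd (snd v)"

lemma hsq_nonneg: "hsq x \<ge> 0" by (simp add: hsq_def)
lemma hquart_nonneg: "hquart x \<ge> 0" by (simp add: hquart_def)

lemma hnorm_eq_hquart_powr: "hnorm x = hquart x powr (1/4)"
  by (cases x) (simp add: hnorm_def hquart_def hsq_def power2_norm_eq_inner[symmetric] power2_eq_square)

lemma hsq_has_derivative: "(hsq has_derivative hsq_deriv x) (at x)"
  unfolding hsq_def hsq_deriv_def[abs_def]
  by (auto intro!: derivative_eq_intros simp: inner_commute)

lemma hquart_has_derivative: "(hquart has_derivative hquart_deriv x) (at x)"
  unfolding hquart_def[abs_def] hquart_deriv_def[abs_def]
  using hsq_has_derivative[of x]
  by (auto intro!: derivative_eq_intros simp: algebra_simps)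

lemma C2_hquart: "C2 (hquart :: 'd::finite heis \<Rightarrow> real)"
proof -
  have S: "C2 (hsq :: 'd heis \<Rightarrow> real)"
  proof -
    have e: "hsq = (\<lambda>x::'d heis. norm (fst x - 0) ^ 2 + norm ((\<lambda>x. fst (snd x)) x - 0) ^ 2)"
      by (simp add: fun_eq_iff hsq_def power2_norm_eq_inner)
    show ?thesis unfolding e
      by (intro C2_add C2_norm_diff_power2 bounded_linear_fst bounded_linear_compose[OF bounded_linear_fst bounded_linear_snd])
  qed
  have t: "C2 (\<lambda>x::'d heis. snd (snd x))"
    by (intro C2_linear bounded_linear_compose[OF bounded_linear_snd bounded_linear_snd])
  show ?thesis unfolding hquart_def[abs_def] by (intro C2_add C2_mult S t)
qed

definition Xhquart :: "('d::finite + 'd) \<Rightarrow> 'd heis \<Rightarrow> real" where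
  "Xhquart j y = (case j of
     Inl k \<Rightarrow> 4 * (hsq y * (fst y \<bullet> axis k 1) + snd (snd y) * (fst (snd y) \<bullet> axis k 1))
   | Inr k \<Rightarrow> 4 * (hsq y * (fst (snd y) \<bullet> axis k 1) - snd (snd y) * (fst y \<bullet> axis k 1)))"

definition Xhquart_deriv :: "('d::finite + 'd) \<Rightarrow> 'd heis \<Rightarrow> 'd heis \<Rightarrow> real" where
  "Xhquart_deriv j x v = (case j of
     Inl k \<Rightarrow> 4 * (hsq_deriv x v * (fst x \<bullet> axis k 1) + hsq x * (fst v \<bullet> axis k 1)
                 + (snd (snd v) * (fst (snd x) \<bullet> axis k 1) + snd (snd x) * (fst (snd v) \<bullet> axis k 1)))
   | Inr k \<Rightarrow> 4 * (hsq_deriv x v * (fst (snd x) \<bullet> axis k 1) + hsq x * (fst (snd v) \<bullet> axis k 1)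
                 - (snd (snd v) * (fst x \<bullet> axis k 1) + snd (snd x) * (fst v \<bullet> axis k 1))))"

lemma Xop_hquart: "Xop j hquart = Xhquart j"
proof -
  have "Xop j hquart = (\<lambda>y. hquart_deriv y (hfield j y))" by (rule Xop_has_derivative_fun[OF hquart_has_derivative])
  also have "\<dots> = Xhquart j"
  proof
    fix y :: "'a heis"
    obtain a b t where y: "y = (a, b, t)" by (metis prod.collapse)
    show "hquart_deriv y (hfield j y) = Xhquart j y"
      by (cases j) (simp_all add: y hquart_deriv_def hsq_deriv_def Xhquart_def inner_axis algebra_simps)
  qed
  finally show ?thesis .
qed

lemma Xhquart_has_derivative: "(Xhquart j has_derivative Xhquart_deriv j x) (at x)"
proof (cases j)
  case (Inl k)
  show ?thesis unfolding Inl Xhquart_def[abs_def] Xhquart_deriv_def[abs_def] using hsq_has_derivative[of x]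
    by (auto intro!: derivative_eq_intros simp: algebra_simps)
next
  case (Inr k)
  show ?thesis unfolding Inr Xhquart_def[abs_def] Xhquart_deriv_def[abs_def] using hsq_has_derivative[of x]
    by (auto intro!: derivative_eq_intros simp: algebra_simps)
qed

lemma hhess_hquart: "hhess hquart x $ i $ j = Xhquart_deriv j x (hfield i x)"
  unfolding hhess_def Xop_hquart using Xop_has_derivative[OF Xhquart_has_derivative] by simp

lemma hquart_component_bounds:
  fixes x :: "'d::finite heis"
  shows "\<bar>fst x \<bullet> axis k 1\<bar> \<le> sqrt (hsq x)" "\<bar>fst (snd x) \<bullet> axis k 1\<bar> \<le> sqrt (hsq x)"
    "hsq x \<le> sqrt (hquart x)" "\<bar>snd (snd x)\<bar> \<le> sqrt (hquart x)"
proof -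
  have "\<bar>fst x $ k\<bar> \<le> norm (fst x)" by (rule component_le_norm_cart)
  also have "\<dots> = sqrt (fst x \<bullet> fst x)" by (simp add: norm_eq_sqrt_inner)
  also have "\<dots> \<le> sqrt (hsq x)" unfolding hsq_def by simp
  finally show "\<bar>fst x \<bullet> axis k 1\<bar> \<le> sqrt (hsq x)" by (simp add: inner_axis)
  have "\<bar>fst (snd x) $ k\<bar> \<le> norm (fst (snd x))" by (rule component_le_norm_cart)
  also have "\<dots> = sqrt (fst (snd x) \<bullet> fst (snd x))" by (simp add: norm_eq_sqrt_inner)
  also have "\<dots> \<le> sqrt (hsq x)" unfolding hsq_def by simp
  finally show "\<bar>fst (snd x) \<bullet> axis k 1\<bar> \<le> sqrt (hsq x)" by (simp add: inner_axis)
  show "hsq x \<le> sqrt (hquart x)" unfolding hquart_def using hsq_nonneg[of x]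
    by (intro real_le_rsqrt) (simp add: power2_eq_square)
  show "\<bar>snd (snd x)\<bar> \<le> sqrt (hquart x)" unfolding hquart_def
    by (rule real_le_rsqrt) (simp add: power2_eq_square)
qed

lemma hfield_bounds:
  fixes x :: "'d::finite heis" and i :: "'d + 'd"
  defines "v \<equiv> hfield i x"
  shows "\<bar>fst v \<bullet> axis k 1\<bar> \<le> 1" "\<bar>fst (snd v) \<bullet> axis k 1\<bar> \<le> 1"
    "\<bar>snd (snd v)\<bar> \<le> 2 * sqrt (hsq x)" "\<bar>hsq_deriv x v\<bar> \<le> 2 * sqrt (hsq x)"
proof -
  obtain a b t where x: "x = (a, b, t)" by (metis prod.collapse)
  note cb = hquart_component_bounds[of x]
  show "\<bar>fst v \<bullet> axis k 1\<bar> \<le> 1" unfolding v_def x by (cases i) (auto simp: inner_axis_axis)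
  show "\<bar>fst (snd v) \<bullet> axis k 1\<bar> \<le> 1" unfolding v_def x by (cases i) (auto simp: inner_axis_axis)
  show "\<bar>snd (snd v)\<bar> \<le> 2 * sqrt (hsq x)"
  proof (cases i)
    case (Inl j) then show ?thesis using cb(2)[of j] unfolding v_def x by (simp add: inner_axis abs_mult)
  next
    case (Inr j) then show ?thesis using cb(1)[of j] unfolding v_def x by (simp add: inner_axis abs_mult)
  qed
  show "\<bar>hsq_deriv x v\<bar> \<le> 2 * sqrt (hsq x)"
  proof (cases i)
    case (Inl j) then show ?thesis using cb(1)[of j] unfolding v_def x by (simp add: hsq_deriv_def inner_axis abs_mult)
  next
    case (Inr j) then show ?thesis using cb(2)[of j] unfolding v_def x by (simp add: hsq_deriv_def inner_axis abs_mult)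
  qed
qed

lemma abs_products_sum_bound:
  fixes zA za zc zB zb zd zs zS zq zt :: real
  assumes "\<bar>zA\<bar> \<le> 2*zs" "\<bar>za\<bar> \<le> zs" "\<bar>zc\<bar> \<le> 1" "\<bar>zB\<bar> \<le> 2*zs" "\<bar>zb\<bar> \<le> zs" "\<bar>zd\<bar> \<le> 1"
    "zS = zs*zs" "zS \<le> zq" "\<bar>zt\<bar> \<le> zq" "zs \<ge> 0" "zS \<ge> 0"
  shows "\<bar>zA*za + zS*zc + (zB*zb + zt*zd)\<bar> \<le> 6*zq" "\<bar>zA*za + zS*zc - (zB*zb + zt*zd)\<bar> \<le> 6*zq"
proof -
  have "\<bar>zA\<bar> * \<bar>za\<bar> \<le> (2*zs) * zs" using assms by (intro mult_mono) auto
  then have 1: "\<bar>zA*za\<bar> \<le> 2*zS" using assms(7) by (simp add: abs_mult)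
  have "\<bar>zB\<bar> * \<bar>zb\<bar> \<le> (2*zs) * zs" using assms by (intro mult_mono) auto
  then have 3: "\<bar>zB*zb\<bar> \<le> 2*zS" using assms(7) by (simp add: abs_mult)
  have "\<bar>zS\<bar> * \<bar>zc\<bar> \<le> zS * 1" using assms by (intro mult_mono) auto
  then have 2: "\<bar>zS*zc\<bar> \<le> zS" by (simp add: abs_mult)
  have "\<bar>zt\<bar> * \<bar>zd\<bar> \<le> zq * 1" using assms by (intro mult_mono) auto
  then have 4: "\<bar>zt*zd\<bar> \<le> zq" by (simp add: abs_mult)
  have t1: "\<bar>zA*za + zS*zc + (zB*zb + zt*zd)\<bar> \<le> \<bar>zA*za\<bar> + \<bar>zS*zc\<bar> + (\<bar>zB*zb\<bar> + \<bar>zt*zd\<bar>)"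
    by (rule order_trans[OF abs_triangle_ineq add_mono[OF abs_triangle_ineq abs_triangle_ineq]])
  have t2: "\<bar>zA*za + zS*zc - (zB*zb + zt*zd)\<bar> \<le> \<bar>zA*za\<bar> + \<bar>zS*zc\<bar> + (\<bar>zB*zb\<bar> + \<bar>zt*zd\<bar>)"
    by (rule order_trans[OF abs_triangle_ineq4 add_mono[OF abs_triangle_ineq abs_triangle_ineq]])
  show "\<bar>zA*za + zS*zc + (zB*zb + zt*zd)\<bar> \<le> 6*zq" using t1 1 2 3 4 assms(8) by linarith
  show "\<bar>zA*za + zS*zc - (zB*zb + zt*zd)\<bar> \<le> 6*zq" using t2 1 2 3 4 assms(8) by linarith
qed

lemma hhess_hquart_bound: "\<bar>hhess hquart x $ i $ j\<bar> \<le> 24 * sqrt (hquart x)"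
proof -
  define s where "s = sqrt (hsq x)"
  have s: "s \<ge> 0" "hsq x = s * s" unfolding s_def using hsq_nonneg[of x] by (auto simp: real_sqrt_mult[symmetric])
  note cb = hquart_component_bounds[of x, folded s_def] and hb = hfield_bounds[where x=x and i=i, folded s_def]
  show ?thesis
  proof (cases j)
    case (Inl k)
    have "\<bar>hsq_deriv x (hfield i x) * (fst x \<bullet> axis k 1) + hsq x * (fst (hfield i x) \<bullet> axis k 1)
       + (snd (snd (hfield i x)) * (fst (snd x) \<bullet> axis k 1) + snd (snd x) * (fst (snd (hfield i x)) \<bullet> axis k 1))\<bar>
       \<le> 6 * sqrt (hquart x)"
      by (rule abs_products_sum_bound(1)) (use cb hb s hsq_nonneg[of x] in auto)
    then show ?thesis unfolding hhess_hquart Inl Xhquart_deriv_def by (simp add: abs_mult)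
  next
    case (Inr k)
    have "\<bar>hsq_deriv x (hfield i x) * (fst (snd x) \<bullet> axis k 1) + hsq x * (fst (snd (hfield i x)) \<bullet> axis k 1)
       - (snd (snd (hfield i x)) * (fst x \<bullet> axis k 1) + snd (snd x) * (fst (hfield i x) \<bullet> axis k 1))\<bar>
       \<le> 6 * sqrt (hquart x)"
      by (rule abs_products_sum_bound(2)) (use cb hb s hsq_nonneg[of x] in auto)
    then show ?thesis unfolding hhess_hquart Inr Xhquart_deriv_def by (simp add: abs_mult)
  qed
qed

lemma Xhquart_bound: "\<bar>Xhquart j x\<bar> \<le> 8 * sqrt (hquart x) * sqrt (hsq x)"
proof -
  define s where "s = sqrt (hsq x)"
  define q where "q = sqrt (hquart x)"
  have s: "s \<ge> 0" unfolding s_def using hsq_nonneg[of x] by simp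
  note cb = hquart_component_bounds[of x, folded s_def q_def]
  have m1: "\<bar>hsq x * c\<bar> \<le> q * s" if "\<bar>c\<bar> \<le> s" for c
    using cb(3) that hsq_nonneg[of x] s by (simp add: abs_mult mult_mono)
  have m2: "\<bar>snd (snd x) * c\<bar> \<le> q * s" if "\<bar>c\<bar> \<le> s" for c
    using cb(4) that s by (simp add: abs_mult mult_mono)
  show ?thesis
  proof (cases j)
    case (Inl k)
    have "\<bar>hsq x * (fst x \<bullet> axis k 1) + snd (snd x) * (fst (snd x) \<bullet> axis k 1)\<bar> \<le> 2 * (q * s)"
      using order_trans[OF abs_triangle_ineq add_mono[OF m1[OF cb(1)[of k]] m2[OF cb(2)[of k]]]] by simp
    then show ?thesis unfolding Xhquart_def Inl s_def q_def by simp
  next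
    case (Inr k)
    have "\<bar>hsq x * (fst (snd x) \<bullet> axis k 1) - snd (snd x) * (fst x \<bullet> axis k 1)\<bar> \<le> 2 * (q * s)"
      using order_trans[OF abs_triangle_ineq4 add_mono[OF m1[OF cb(2)[of k]] m2[OF cb(1)[of k]]]] by simp
    then show ?thesis unfolding Xhquart_def Inr s_def q_def by simp
  qed
qed

text \<open>A smooth substitute for \<open>ln \<rho>\<close>: \<open>lyap = ln hnorm + o(1)\<close> at infinity.\<close>

definition lyap :: "'d::finite heis \<Rightarrow> real" where "lyap y = ln (1 + hquart y) / 4"
definition lyap1 :: "real \<Rightarrow> real" where "lyap1 s = 1 / (4 * (1 + s))"
definition lyap2 :: "real \<Rightarrow> real" where "lyap2 s = - 1 / (4 * (1 + s)^2)"

lemma lyap1_deriv: "t \<in> {-1/2<..} \<Longrightarrow> ((\<lambda>s. ln (1 + s) / 4) has_real_derivative lyap1 t) (at t)"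
  unfolding lyap1_def by (auto intro!: derivative_eq_intros simp: field_simps)
lemma lyap2_deriv: assumes "t \<in> {-1/2<..}" shows "(lyap1 has_real_derivative lyap2 t) (at t)"
proof -
  have "1 + t \<noteq> 0" using assms by simp
  then show ?thesis unfolding lyap1_def[abs_def] lyap2_def
    by (auto intro!: derivative_eq_intros simp: divide_simps power2_eq_square) (simp add: algebra_simps)
qed
lemma continuous_on_lyap2: "continuous_on {-1/2<..} lyap2"
  unfolding lyap2_def[abs_def] by (intro continuous_intros) (auto simp: add_nonneg_eq_0_iff)

lemma hquart_mem_greaterThan: "hquart y \<in> {-1/2<..}" using hquart_nonneg[of y] by simp

lemma C2_lyap: "C2 (lyap :: 'd::finite heis \<Rightarrow> real)"
  unfolding lyap_def[abs_def]
  by (rule C2_compose[OF C2_hquart open_greaterThan hquart_mem_greaterThan lyap1_deriv lyap2_deriv continuous_on_lyap2])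

lemma hhess_lyap: "hhess lyap x = (\<chi> i j. lyap1 (hquart x) * hhess hquart x $ i $ j + lyap2 (hquart x) * (Xhquart i x * Xhquart j x))"
proof -
  have "hhess (\<lambda>y. ln (1 + hquart y) / 4) x = (\<chi> i j. lyap1 (hquart x) * hhess hquart x $ i $ j + lyap2 (hquart x) * (Xop i hquart x * Xop j hquart x))"
    by (rule hhess_compose[OF C2_differentiable[OF C2_hquart] C2_Xop_differentiable[OF C2_hquart] hquart_mem_greaterThan lyap1_deriv lyap2_deriv])
  then show ?thesis unfolding lyap_def[abs_def] Xop_hquart by simp
qed

lemma lyap_has_derivative: "(lyap has_derivative (\<lambda>v. hquart_deriv x v * lyap1 (hquart x))) (at x)"
  unfolding lyap_def[abs_def] by (rule DERIV_compose_FDERIV[OF lyap1_deriv[OF hquart_mem_greaterThan] hquart_has_derivative])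

lemma hhess_lyap_bound:
  assumes P1: "hquart x \<ge> 1"
  shows "\<bar>hhess lyap x $ i $ j\<bar> \<le> 22 / sqrt (hquart x)"
proof -
  define P where "P = hquart x"
  define q where "q = sqrt P"
  have P0: "P \<ge> 1" using P1 unfolding P_def .
  have q1: "q \<ge> 1" unfolding q_def using P0 by simp
  have qq: "q * q = P" unfolding q_def using P0 by simp
  have S: "hsq x \<le> q" using hquart_component_bounds(3)[of x] unfolding q_def P_def .
  have H: "\<bar>hhess hquart x $ i $ j\<bar> \<le> 24 * q" using hhess_hquart_bound[of x i j] unfolding q_def P_def .
  define sv where "sv = sqrt (hsq x)"
  have sv0: "sv \<ge> 0" "sv * sv = hsq x" unfolding sv_def using hsq_nonneg[of x] by auto
  have X: "\<bar>Xhquart i x * Xhquart j x\<bar> \<le> 64 * q * q * q"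
  proof -
    have "\<bar>Xhquart i x\<bar> \<le> 8 * q * sv" "\<bar>Xhquart j x\<bar> \<le> 8 * q * sv"
      using Xhquart_bound[of i x] Xhquart_bound[of j x] unfolding q_def P_def sv_def by auto
    then have "\<bar>Xhquart i x\<bar> * \<bar>Xhquart j x\<bar> \<le> (8 * q * sv) * (8 * q * sv)" by (intro mult_mono) auto
    also have "\<dots> = 64 * q * q * (sv * sv)" by simp
    also have "\<dots> \<le> 64 * q * q * q" using S sv0 q1 by (intro mult_left_mono) auto
    finally show ?thesis by (simp add: abs_mult)
  qed
  have f1: "\<bar>lyap1 P\<bar> \<le> 1 / (4 * (q * q))"
    unfolding lyap1_def qq using P0 by (simp add: frac_le)
  have f2: "\<bar>lyap2 P\<bar> \<le> 1 / (4 * (q * q) * (q * q))"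
  proof -
    have "(q * q) * (q * q) \<le> (1 + P)^2" unfolding qq using P0 by (simp add: power2_eq_square mult_mono)
    then show ?thesis unfolding lyap2_def using P0 q1 by (simp add: frac_le)
  qed
  have a1: "\<bar>lyap1 P * hhess hquart x $ i $ j\<bar> \<le> 6 / q"
  proof -
    have "\<bar>lyap1 P\<bar> * \<bar>hhess hquart x $ i $ j\<bar> \<le> (1 / (4 * (q * q))) * (24 * q)" using f1 H by (intro mult_mono) auto
    also have "\<dots> = 6 / q" using q1 by (simp add: field_simps)
    finally show ?thesis by (simp add: abs_mult)
  qed
  have a2: "\<bar>lyap2 P * (Xhquart i x * Xhquart j x)\<bar> \<le> 16 / q"
  proof -
    have "\<bar>lyap2 P\<bar> * \<bar>Xhquart i x * Xhquart j x\<bar> \<le> (1 / (4 * (q * q) * (q * q))) * (64 * q * q * q)" using f2 X by (intro mult_mono) auto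
    also have "\<dots> = 16 / q" using q1 by (simp add: field_simps)
    finally show ?thesis by (simp add: abs_mult)
  qed
  have "\<bar>lyap1 P * hhess hquart x $ i $ j + lyap2 P * (Xhquart i x * Xhquart j x)\<bar> \<le> 6 / q + 16 / q"
    using order_trans[OF abs_triangle_ineq add_mono[OF a1 a2]] .
  then show ?thesis unfolding hhess_lyap q_def P_def by simp
qed

lemma hquart_deriv_gscale:
  assumes g: "\<And>k. go \<le> g1 k" "\<And>k. go \<le> g2 k" "go \<le> g3" "go > 0"
  shows "hquart_deriv x (gscale g1 g2 g3 x) \<ge> 2 * go * hquart x"
proof -
  have sq_mono: "go * (y * y) \<le> y * (c * y)" if "go \<le> c" for c y :: real
    using mult_right_mono[OF that, of "y * y"] by (simp add: algebra_simps)
  obtain a b t where x: "x = (a, b, t)" by (metis prod.collapse)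
  have ia: "a \<bullet> (\<chi> k. g1 k * a $ k) \<ge> go * (a \<bullet> a)"
    unfolding inner_vec_def by (simp add: sum_distrib_left) (intro sum_mono sq_mono g)
  have ib: "b \<bullet> (\<chi> k. g2 k * b $ k) \<ge> go * (b \<bullet> b)"
    unfolding inner_vec_def by (simp add: sum_distrib_left) (intro sum_mono sq_mono g)
  define S where "S = a \<bullet> a + b \<bullet> b"
  have S0: "S \<ge> 0" unfolding S_def by simp
  have DS: "hsq_deriv x (gscale g1 g2 g3 x) \<ge> 2 * go * S"
    unfolding hsq_deriv_def x gscale_def S_def using ia ib by (simp add: algebra_simps)
  define D where "D = hsq_deriv x (gscale g1 g2 g3 x)"
  have SS: "hsq x = S" unfolding hsq_def x S_def by simp
  have A: "2 * S * D \<ge> 2 * S * (2 * go * S)"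
    using DS S0 unfolding D_def by (intro mult_left_mono) auto
  have B: "2 * t * (g3 * t) \<ge> 2 * go * (t * t)"
  proof -
    have "go * (t * t) \<le> g3 * (t * t)" using g by (intro mult_right_mono) auto
    then show ?thesis by (simp add: algebra_simps)
  qed
  have E: "hquart_deriv x (gscale g1 g2 g3 x) = 2 * S * D + 2 * t * (g3 * t)"
    unfolding hquart_deriv_def D_def SS[symmetric] by (simp add: x gscale_def)
  have F: "2 * S * (2 * go * S) + 2 * go * (t * t) \<ge> 2 * go * hquart x"
  proof -
    have "hquart x = S * S + t * t" unfolding hquart_def SS by (simp add: x)
    moreover have "go * (S * S) \<ge> 0" using g S0 by simp
    ultimately show ?thesis by (simp add: algebra_simps)
  qed
  show ?thesis using A B E F by linarith
qed

lemma frechet_derivative_hnorm: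
  assumes P: "0 < hquart x"
  shows "frechet_derivative hnorm (at x) w = hquart_deriv x w / (4 * hnorm x ^ 3)"
proof -
  have hn: "hnorm = (\<lambda>y. hquart y powr (1/4))" by (rule ext) (simp add: hnorm_eq_hquart_powr)
  have "(hnorm has_derivative (\<lambda>w. hquart_deriv x w * ((1/4) * hquart x powr (1/4 - 1)))) (at x)"
    unfolding hn by (rule DERIV_compose_FDERIV[OF has_real_derivative_powr hquart_has_derivative])
      (use P in simp)
  moreover have "hquart x powr (1/4 - 1) = 1 / hnorm x ^ 3"
  proof -
    have "hnorm x ^ 3 = hquart x powr (3/4)"
      unfolding hnorm_eq_hquart_powr using P by (simp add: powr_power)
    moreover have "(1/4 - 1 :: real) = - (3/4)" by simp
    ultimately show ?thesis by (simp add: powr_minus_divide)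
  qed
  ultimately show ?thesis by (simp add: frechet_derivative_at[symmetric])
qed

lemma lyap_drift:
  assumes g: "\<And>k. go \<le> g1 k" "\<And>k. go \<le> g2 k" "go \<le> g3" "go > 0"
    and P1: "hquart x \<ge> 1"
    and dr: "frechet_derivative hnorm (at x) v
      \<le> - frechet_derivative hnorm (at x) (gscale g1 g2 g3 x) + (go/8) / hnorm x ^ 3"
  shows "v \<bullet> egrad lyap x \<le> - go / 8"
proof -
  define P where "P = hquart x"
  have P: "0 < P" "1 \<le> P" using P1 unfolding P_def by simp_all
  have "0 < hnorm x ^ 3" using P unfolding P_def hnorm_eq_hquart_powr by simp
  then have "hquart_deriv x v \<le> - hquart_deriv x (gscale g1 g2 g3 x) + go / 2"
    using dr P unfolding frechet_derivative_hnorm[OF P(1)[unfolded P_def]] by (simp add: field_simps)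
  moreover have "hquart_deriv x (gscale g1 g2 g3 x) \<ge> 2 * go * P"
    unfolding P_def by (rule hquart_deriv_gscale) (use g in auto)
  ultimately have D: "hquart_deriv x v \<le> - 2 * go * P + go / 2" by linarith
  have "go \<le> go * P" using P g(4) by simp
  moreover have "- go / 8 * (4 * (1 + P)) = - go / 2 - (go * P) / 2" "- 2 * go * P = - 2 * (go * P)"
    by (simp_all add: algebra_simps)
  ultimately have bound: "- 2 * go * P + go / 2 \<le> - go / 8 * (4 * (1 + P))" using g(4) by linarith
  have "v \<bullet> egrad lyap x = hquart_deriv x v / (4 * (1 + P))"
    using egrad_inner[OF lyap_has_derivative, of x v] unfolding P_def lyap1_def by (simp add: inner_commute)
  also have "\<dots> \<le> (- 2 * go * P + go / 2) / (4 * (1 + P))" using D P by (intro divide_right_mono) auto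
  also have "\<dots> \<le> - go / 8" using bound P by (simp add: divide_le_eq)
  finally show ?thesis .
qed

lemma continuous_on_hquart: "continuous_on UNIV hquart"
  using hquart_has_derivative by (meson continuous_at_imp_continuous_on has_derivative_continuous)

lemma continuous_on_lyap: "continuous_on UNIV lyap"
  using lyap_has_derivative by (meson continuous_at_imp_continuous_on has_derivative_continuous)

lemma norm_le_hquart: "norm x ^ 2 \<le> sqrt (hquart x) + hquart x"
proof -
  obtain a b t where x: "x = (a, b, t)" by (metis prod.collapse)
  have "norm x ^ 2 = hsq x + snd (snd x) ^ 2"
    unfolding x hsq_def by (simp add: norm_Pair power2_norm_eq_inner)
  moreover have "hsq x \<le> sqrt (hquart x)" by (rule hquart_component_bounds(3))
  moreover have "snd (snd x) ^ 2 \<le> hquart x" unfolding hquart_def by (simp add: power2_eq_square)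
  ultimately show ?thesis by linarith
qed

lemma hquart_ge_far: "\<exists>T. \<forall>x. norm x \<ge> T \<longrightarrow> hquart x \<ge> Q"
proof -
  define Q' where "Q' = max Q 0"
  define T where "T = sqrt (sqrt Q' + Q') + 1"
  have "hquart x \<ge> Q" if "norm x \<ge> T" for x
  proof (rule ccontr)
    assume "\<not> hquart x \<ge> Q"
    then have "hquart x \<le> Q'" unfolding Q'_def by simp
    then have "norm x ^ 2 \<le> sqrt Q' + Q'" using norm_le_hquart[of x] by (smt (verit) real_sqrt_le_iff)
    then have "norm x \<le> sqrt (sqrt Q' + Q')" by (simp add: real_le_rsqrt)
    then show False using that unfolding T_def by simp
  qed
  then show ?thesis by blast
qed

lemma compact_hquart_sublevel: "compact {x::'d::finite heis. hquart x \<le> Q}"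
proof (subst compact_eq_bounded_closed, intro conjI)
  show "closed {x::'d heis. hquart x \<le> Q}"
    by (rule closed_Collect_le[OF continuous_on_hquart continuous_on_const])
  obtain T where T: "\<forall>x::'d heis. norm x \<ge> T \<longrightarrow> hquart x \<ge> Q + 1" using hquart_ge_far by blast
  show "bounded {x::'d heis. hquart x \<le> Q}"
    unfolding bounded_iff
  proof (intro exI[of _ T] ballI)
    fix x :: "'d heis" assume "x \<in> {x. hquart x \<le> Q}"
    then have "hquart x \<le> Q" by simp
    then show "norm x \<le> T" using T by (meson add_le_same_cancel1 le_cases not_one_le_zero order_trans) 
  qed
qed

section \<open>Liouville theorems\<close>

lemma hquart_large:
  assumes \<delta>: "0 < \<delta>"
  obtains Q0 where "1 \<le> Q0" "\<And>x. Q0 \<le> hquart x \<Longrightarrow> R \<le> hnorm x"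
    "\<And>x. Q0 \<le> hquart x \<Longrightarrow> C / sqrt (hquart x) < \<delta>"
proof
  define c where "c = max C 0 / \<delta>"
  show "1 \<le> max 1 (max ((max R 0) ^ 4) (c^2 + 1))" by simp
  fix x assume x: "max 1 (max ((max R 0) ^ 4) (c^2 + 1)) \<le> hquart x"
  show "R \<le> hnorm x"
  proof (cases "R \<le> 0")
    case True
    then show ?thesis unfolding hnorm_eq_hquart_powr by (meson order_trans powr_ge_zero)
  next
    case False
    then have "(R ^ 4) powr (1/4) \<le> hquart x powr (1/4)"
      using x by (intro powr_mono2) auto
    moreover have "(R ^ 4) powr (1/4) = R"
    proof -
      have "R ^ 4 = R powr (real 4)" using False by (subst powr_realpow) auto
      then have "(R ^ 4) powr (1/4) = R powr (real 4 * (1/4))" by (simp only: powr_powr)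
      then show ?thesis using False by simp
    qed
    ultimately show ?thesis unfolding hnorm_eq_hquart_powr by linarith
  qed
  have "c < sqrt (hquart x)"
    using x real_sqrt_less_mono[of "c^2" "hquart x"] \<delta> unfolding c_def by simp
  then have "max C 0 < \<delta> * sqrt (hquart x)" using \<delta> unfolding c_def by (simp add: field_simps)
  moreover have "0 < sqrt (hquart x)" using x by simp
  ultimately show "C / sqrt (hquart x) < \<delta>" by (simp add: field_simps)
qed

lemma trace_hhess_lyap_bound:
  fixes x :: "'d::finite heis"
  assumes A: "A \<in> ellipt_set l L" "0 \<le> l" and x: "1 \<le> hquart x" and \<epsilon>: "0 \<le> \<epsilon>"
  shows "\<bar>trace (A ** hhess (\<lambda>y. \<epsilon> * lyap y) x)\<bar>
    \<le> \<epsilon> * (L * (real CARD('d + 'd) * real CARD('d + 'd) * (22 / sqrt (hquart x))))"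
proof -
  have "hhess (\<lambda>y. \<epsilon> * lyap y) x = (\<chi> i j. \<epsilon> * hhess lyap x $ i $ j + 0 * (Xop i lyap x * Xop j lyap x))"
    by (rule hhess_compose[OF C2_differentiable[OF C2_lyap] C2_Xop_differentiable[OF C2_lyap],
          of UNIV "\<lambda>s. \<epsilon> * s" "\<lambda>s. \<epsilon>" "\<lambda>s. 0"]) (auto intro!: derivative_eq_intros)
  then have ent: "\<bar>hhess (\<lambda>y. \<epsilon> * lyap y) x $ i $ k\<bar> \<le> \<epsilon> * (22 / sqrt (hquart x))" for i k
    using mult_left_mono[OF hhess_lyap_bound[of x i k], of \<epsilon>] x \<epsilon> by (simp add: abs_mult)
  have "\<bar>trace (A ** hhess (\<lambda>y. \<epsilon> * lyap y) x)\<bar>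
      \<le> L * (\<Sum>i\<in>UNIV. \<Sum>k\<in>UNIV. \<bar>hhess (\<lambda>y. \<epsilon> * lyap y) x $ i $ k\<bar>)"
    by (rule ellipt_set_trace_bound[OF A])
  also have "\<dots> \<le> L * (\<Sum>i\<in>(UNIV::('d+'d) set). \<Sum>k\<in>(UNIV::('d+'d) set). \<epsilon> * (22 / sqrt (hquart x)))"
  proof (rule mult_left_mono)
    show "0 \<le> L" using ellipt_set_entry_bound[OF A, of undefined undefined] by linarith
  qed (intro sum_mono ent)
  finally show ?thesis by (simp add: algebra_simps)
qed

text \<open>Far out, the drift condition pushes \<open>b\<^sup>\<alpha> \<bullet> D lyap\<close> below \<open>-\<gamma>\<^sub>o/8\<close>, while the
  horizontal Hessian of \<open>lyap\<close> decays like \<open>\<rho>\<^sup>-\<^sup>2\<close>.\<close>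

lemma lyap_strict_super:
  fixes b :: "'a \<Rightarrow> 'd::finite heis \<Rightarrow> 'd heis"
  assumes lL: "0 < l" "l \<le> L" and go: "0 < go" "\<And>k. go \<le> g1 k" "\<And>k. go \<le> g2 k" "go \<le> g3"
    and drift: "\<And>e. e > 0 \<Longrightarrow> \<exists>R. \<forall>x \<alpha>. hnorm x \<ge> R \<longrightarrow>
        frechet_derivative hnorm (at x) (b \<alpha> x)
          \<le> - frechet_derivative hnorm (at x) (gscale g1 g2 g3 x) + e / hnorm x ^ 3"
  obtains Q0 where "1 \<le> Q0"
    "\<And>x \<epsilon>. Q0 \<le> hquart x \<Longrightarrow> 0 < \<epsilon> \<Longrightarrow> strict_extremal_super l L b (\<lambda>y. \<epsilon> * lyap y) x"
proof -
  obtain Rd where Rd: "\<forall>x \<alpha>. hnorm x \<ge> Rd \<longrightarrow> frechet_derivative hnorm (at x) (b \<alpha> x)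
      \<le> - frechet_derivative hnorm (at x) (gscale g1 g2 g3 x) + (go/8) / hnorm x ^ 3"
    using drift[of "go/8"] go(1) by auto
  define N where "N = real CARD('d + 'd)"
  obtain Q0 where Q0: "1 \<le> Q0" "\<And>x::'d heis. Q0 \<le> hquart x \<Longrightarrow> Rd \<le> hnorm x"
    "\<And>x::'d heis. Q0 \<le> hquart x \<Longrightarrow> L * (N * N * 22) / sqrt (hquart x) < go / 8"
  proof -
    have "0 < go / 8" using go(1) by simp
    then show ?thesis using that by (rule hquart_large)
  qed
  show ?thesis
  proof (rule that[OF Q0(1)])
    fix x :: "'d heis" and \<epsilon> :: real assume x: "Q0 \<le> hquart x" and \<epsilon>: "0 < \<epsilon>"
    define m1 where "m1 = - (\<epsilon> * (L * (N * N * (22 / sqrt (hquart x)))))"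
    have hess: "\<forall>A\<in>ellipt_set l L. m1 \<le> - trace (A ** hhess (\<lambda>y. \<epsilon> * lyap y) x)"
    proof
      fix A :: "'d hmat" assume "A \<in> ellipt_set l L"
      from trace_hhess_lyap_bound[OF this _ _ less_imp_le[OF \<epsilon>]] lL x Q0(1)
      show "m1 \<le> - trace (A ** hhess (\<lambda>y. \<epsilon> * lyap y) x)"
        unfolding m1_def N_def by (simp add: abs_le_iff)
    qed
    have "((\<lambda>y. \<epsilon> * lyap y) has_derivative (\<lambda>v. \<epsilon> * (hquart_deriv x v * lyap1 (hquart x)))) (at x)"
      by (rule has_derivative_mult_right[OF lyap_has_derivative])
    then have eg: "b \<alpha> x \<bullet> egrad (\<lambda>y. \<epsilon> * lyap y) x = \<epsilon> * (b \<alpha> x \<bullet> egrad lyap x)" for \<alpha>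
      by (simp only: inner_commute[of "b \<alpha> x"] egrad_inner egrad_inner[OF lyap_has_derivative[of x]])
    have drift_x: "\<forall>\<alpha>. \<epsilon> * (go / 8) \<le> - (b \<alpha> x \<bullet> egrad (\<lambda>y. \<epsilon> * lyap y) x)"
    proof
      fix \<alpha>
      have "b \<alpha> x \<bullet> egrad lyap x \<le> - go / 8"
        by (rule lyap_drift[of go g1 g2 g3]) (use go x Q0(1) Q0(2)[OF x] Rd in auto)
      from mult_left_mono[OF this, of \<epsilon>] \<epsilon>
      show "\<epsilon> * (go / 8) \<le> - (b \<alpha> x \<bullet> egrad (\<lambda>y. \<epsilon> * lyap y) x)" by (simp add: eg)
    qed
    have "0 < \<epsilon> * (go / 8 - L * (N * N * 22) / sqrt (hquart x))" using Q0(3)[OF x] \<epsilon> by simp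
    then have "0 < m1 + \<epsilon> * (go / 8)" unfolding m1_def by (simp add: algebra_simps)
    with hess drift_x show "strict_extremal_super l L b (\<lambda>y. \<epsilon> * lyap y) x"
      unfolding strict_extremal_super_def by blast
  qed
qed

lemma lyap_dominates_log_growth:
  fixes u :: "'d::finite heis \<Rightarrow> real"
  assumes growth: "\<forall>e>0. eventually (\<lambda>x. u x / ln (hnorm x) \<le> e) at_infinity" and \<epsilon>: "0 < \<epsilon>"
  obtains T where "\<And>y. T \<le> norm y \<Longrightarrow> u y - \<epsilon> * lyap y < c"
proof -
  have "eventually (\<lambda>x. u x / ln (hnorm x) \<le> \<epsilon> / 2) at_infinity"
    using growth half_gt_zero[OF \<epsilon>] by blast
  then obtain R where R: "\<forall>y. R \<le> norm y \<longrightarrow> u y / ln (hnorm y) \<le> \<epsilon> / 2"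
    unfolding eventually_at_infinity by blast
  define c0 where "c0 = - 8 * c / \<epsilon>"
  obtain T where T: "\<forall>y::'d heis. T \<le> norm y \<longrightarrow> max 2 (exp c0 + 1) \<le> hquart y"
    using hquart_ge_far by blast
  show ?thesis
  proof (rule that[of "max T R"])
    fix y :: "'d heis" assume y: "max T R \<le> norm y"
    then have P: "exp c0 < hquart y" "2 \<le> hquart y" using T by auto
    then have "exp c0 < exp (ln (hquart y))" by simp
    then have "\<epsilon> * c0 < \<epsilon> * ln (hquart y)" using \<epsilon> by simp
    then have "- c < \<epsilon> * ln (hquart y) / 8" unfolding c0_def using \<epsilon> by simp
    moreover have "u y \<le> \<epsilon> * ln (hquart y) / 8"
    proof -
      have ln: "ln (hnorm y) = ln (hquart y) / 4"
        unfolding hnorm_eq_hquart_powr using P by (simp add: ln_powr)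
      moreover have "0 < ln (hquart y)" using P by simp
      ultimately have "0 < ln (hnorm y)" by simp
      moreover have "u y / ln (hnorm y) \<le> \<epsilon> / 2" using R y by simp
      ultimately have "u y \<le> \<epsilon> / 2 * ln (hnorm y)" by (simp add: pos_divide_le_eq)
      then show ?thesis unfolding ln by simp
    qed
    moreover have "\<epsilon> * ln (hquart y) / 4 \<le> \<epsilon> * lyap y"
      unfolding lyap_def using P \<epsilon> by simp
    ultimately show "u y - \<epsilon> * lyap y < c" by linarith
  qed
qed

text \<open>Comparison with the strict supersolution \<open>\<epsilon> lyap\<close> on the exterior region
  \<open>{Q0 \<le> hquart}\<close>: the growth condition keeps the maximum of \<open>u - \<epsilon> lyap\<close> away from
  infinity, and the strictness keeps it off the interior, so it sits on \<open>{hquart = Q0}\<close>.\<close>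

lemma extremal_sub_lyap_comparison:
  fixes u :: "'d::finite heis \<Rightarrow> real"
  assumes sub: "extremal_sub l L b u" and u: "usc u"
    and growth: "\<forall>e>0. eventually (\<lambda>x. u x / ln (hnorm x) \<le> e) at_infinity"
    and barrier: "\<And>x \<epsilon>. Q0 \<le> hquart x \<Longrightarrow> 0 < \<epsilon> \<Longrightarrow> strict_extremal_super l L b (\<lambda>y. \<epsilon> * lyap y) x"
    and inner: "\<And>y. hquart y = Q0 \<Longrightarrow> u y \<le> m" and \<epsilon>: "0 < \<epsilon>" and x: "Q0 \<le> hquart x"
  shows "u x - \<epsilon> * lyap x \<le> m - \<epsilon> * (ln (1 + Q0) / 4)"
proof (rule ccontr)
  define \<psi>0 where "\<psi>0 = ln (1 + Q0) / 4"
  assume "\<not> ?thesis"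
  then have key: "m - \<epsilon> * \<psi>0 < u x - \<epsilon> * lyap x" unfolding \<psi>0_def by simp
  obtain T where T: "\<And>y. T \<le> norm y \<Longrightarrow> u y - \<epsilon> * lyap y < m - \<epsilon> * \<psi>0"
    using lyap_dominates_log_growth[OF growth \<epsilon>] by blast
  define C where "C = {y::'d heis. Q0 \<le> hquart y} \<inter> cball 0 T"
  have "open ({y. Q0 < hquart y} \<inter> ball 0 T)"
    by (intro open_Int open_ball open_Collect_less[OF continuous_on_const continuous_on_hquart])
  then have open_part: "{y. Q0 < hquart y} \<inter> ball 0 T \<subseteq> interior C"
    by (rule interior_maximal[rotated]) (auto simp: C_def)
  have "continuous_on UNIV (\<lambda>y. - (\<epsilon> * lyap y))" using continuous_on_lyap by (intro continuous_intros)
  from usc_add_continuous[OF u this] have "usc (\<lambda>y. u y - \<epsilon> * lyap y)" by simp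
  then obtain x0 where x0: "x0 \<in> interior C" "local_max_at (\<lambda>y. u y - \<epsilon> * lyap y) x0"
  proof (rule usc_interior_local_max[where K = C and x = x])
    show "compact C" unfolding C_def
      by (intro closed_Int_compact closed_Collect_le[OF continuous_on_const continuous_on_hquart]
          compact_cball)
    have "\<not> T \<le> norm x" using T[of x] key by linarith
    then show "x \<in> C" unfolding C_def using x by simp
    fix y assume y: "y \<in> C" "y \<notin> interior C"
    then have "y \<notin> {y. Q0 < hquart y} \<inter> ball 0 T" using open_part by blast
    then have "hquart y = Q0 \<or> T \<le> norm y" using y(1) unfolding C_def by auto
    then show "u y - \<epsilon> * lyap y < u x - \<epsilon> * lyap x"
    proof
      assume "hquart y = Q0"
      then have "u y \<le> m" "lyap y = \<psi>0" using inner unfolding lyap_def \<psi>0_def by auto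
      then show ?thesis using key by simp
    next
      assume "T \<le> norm y"
      then show ?thesis using T[of y] key by linarith
    qed
  qed
  have "strict_extremal_super l L b (\<lambda>y. \<epsilon> * lyap y) x0"
    using x0(1) interior_subset \<epsilon> unfolding C_def by (intro barrier) auto
  then show False using sub x0(2) C2_cmult[OF C2_lyap] unfolding extremal_sub_def by blast
qed

lemma extremal_sub_attains_max:
  fixes u :: "'d::finite heis \<Rightarrow> real"
  assumes sub: "extremal_sub l L b u" and u: "usc u"
    and growth: "\<forall>e>0. eventually (\<lambda>x. u x / ln (hnorm x) \<le> e) at_infinity"
    and Q0: "1 \<le> Q0"
    and barrier: "\<And>x \<epsilon>. Q0 \<le> hquart x \<Longrightarrow> 0 < \<epsilon> \<Longrightarrow> strict_extremal_super l L b (\<lambda>y. \<epsilon> * lyap y) x"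
  obtains xm where "\<And>x. u x \<le> u xm"
proof -
  define K0 where "K0 = {x::'d heis. hquart x \<le> Q0}"
  have "compact K0" unfolding K0_def by (rule compact_hquart_sublevel)
  moreover have "0 \<in> K0" using Q0 unfolding K0_def hquart_def hsq_def by (simp add: zero_prod_def)
  then have "K0 \<noteq> {}" by blast
  ultimately obtain xm where xm: "\<forall>y\<in>K0. u y \<le> u xm"
    using usc_attains_max[OF u] by meson
  have "u x \<le> u xm" for x
  proof (cases "hquart x \<le> Q0")
    case True
    then show ?thesis using xm unfolding K0_def by blast
  next
    case False
    define D where "D = lyap x - ln (1 + Q0) / 4"
    have D: "0 \<le> D" unfolding D_def lyap_def using False Q0 by simp
    have comp: "u x \<le> u xm + \<epsilon> * D" if "0 < \<epsilon>" for \<epsilon>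
      using extremal_sub_lyap_comparison[OF sub u growth barrier _ that, where m = "u xm" and x = x] xm False
      unfolding K0_def D_def by (force simp: algebra_simps)
    show ?thesis
    proof (rule field_le_epsilon)
      fix e :: real assume e: "0 < e"
      have "e / (D + 1) * D \<le> e" using D e by (simp add: field_simps)
      then show "u x \<le> u xm + e" using comp[of "e / (D + 1)"] D e by simp
    qed
  qed
  then show ?thesis using that by blast
qed

theorem extremal_sub_liouville:
  fixes u :: "'d::finite heis \<Rightarrow> real" and b :: "'a \<Rightarrow> 'd heis \<Rightarrow> 'd heis"
  assumes lL: "0 < l" "l \<le> L" and sub: "extremal_sub l L b u" and u: "usc u"
    and growth: "\<forall>e>0. eventually (\<lambda>x. u x / ln (hnorm x) \<le> e) at_infinity"
    and bb: "uniformly_locally_bounded b"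
    and go: "0 < go" "\<And>k. go \<le> g1 k" "\<And>k. go \<le> g2 k" "go \<le> g3"
    and drift: "\<And>e. e > 0 \<Longrightarrow> \<exists>R. \<forall>x \<alpha>. hnorm x \<ge> R \<longrightarrow>
        frechet_derivative hnorm (at x) (b \<alpha> x)
          \<le> - frechet_derivative hnorm (at x) (gscale g1 g2 g3 x) + e / hnorm x ^ 3"
  shows "\<exists>k. \<forall>x. u x = k"
proof -
  obtain Q0 where "1 \<le> Q0"
    "\<And>x \<epsilon>. Q0 \<le> hquart x \<Longrightarrow> 0 < \<epsilon> \<Longrightarrow> strict_extremal_super l L b (\<lambda>y. \<epsilon> * lyap y) x"
    using lyap_strict_super[OF lL go drift] by blast
  then obtain xm where "\<And>x. u x \<le> u xm"
    using extremal_sub_attains_max[OF sub u growth] by blast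
  then show ?thesis using strong_maximum_principle[OF lL sub u _ refl bb] by blast
qed

lemma uniformly_locally_bounded_if_lipschitz:
  fixes b :: "'a \<Rightarrow> 'n::euclidean_space \<Rightarrow> 'n"
  assumes bdd: "\<And>p. bdd_above (range (\<lambda>\<alpha>. b \<alpha> 0 \<bullet> p))"
    and lip: "\<And>R. R > 0 \<Longrightarrow> \<exists>K. \<forall>\<alpha> x y. norm x \<le> R \<longrightarrow> norm y \<le> R \<longrightarrow>
        norm (b \<alpha> x - b \<alpha> y) \<le> K * norm (x - y)"
  shows "uniformly_locally_bounded b"
  unfolding uniformly_locally_bounded_def
proof
  fix r :: real
  have "\<exists>M. \<forall>\<alpha>. \<bar>b \<alpha> 0 \<bullet> i\<bar> \<le> M" for i
  proof -
    obtain M1 M2 where M: "\<And>\<alpha>. b \<alpha> 0 \<bullet> i \<le> M1" "\<And>\<alpha>. b \<alpha> 0 \<bullet> (- i) \<le> M2"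
      using bdd[of i] bdd[of "- i"] unfolding bdd_above_def by blast
    have "b \<alpha> 0 \<bullet> i \<le> max M1 M2" "- (b \<alpha> 0 \<bullet> i) \<le> max M1 M2" for \<alpha>
      using order_trans[OF M(1) max.cobounded1] order_trans[OF M(2) max.cobounded2] by auto
    then have "\<forall>\<alpha>. \<bar>b \<alpha> 0 \<bullet> i\<bar> \<le> max M1 M2" by (simp add: abs_le_iff)
    then show ?thesis by blast
  qed
  then obtain M where M: "\<And>i \<alpha>. \<bar>b \<alpha> 0 \<bullet> i\<bar> \<le> M i" by metis
  have B0: "norm (b \<alpha> 0) \<le> (\<Sum>i\<in>Basis. M i)" for \<alpha>
    using norm_le_l1[of "b \<alpha> 0"] sum_mono[of Basis "\<lambda>i. \<bar>b \<alpha> 0 \<bullet> i\<bar>" M] M by fastforce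
  define r' where "r' = max r 1"
  obtain K where K: "\<And>\<alpha> x y. norm x \<le> r' \<Longrightarrow> norm y \<le> r' \<Longrightarrow> norm (b \<alpha> x - b \<alpha> y) \<le> K * norm (x - y)"
  proof -
    have "0 < r'" unfolding r'_def by simp
    then show ?thesis using lip that by blast
  qed
  have "norm (b \<alpha> y) \<le> (\<Sum>i\<in>Basis. M i) + \<bar>K\<bar> * r'" if y: "norm y \<le> r" for \<alpha> y
  proof -
    have "norm (b \<alpha> y - b \<alpha> 0) \<le> K * norm y" using K[of y 0 \<alpha>] y unfolding r'_def by simp
    also have "\<dots> \<le> \<bar>K\<bar> * r'" using y unfolding r'_def by (simp add: abs_mult mult_mono)
    finally show ?thesis using B0[of \<alpha>] norm_triangle_sub[of "b \<alpha> y" "b \<alpha> 0"] by linarith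
  qed
  then show "\<exists>B. \<forall>\<alpha> y. norm y \<le> r \<longrightarrow> norm (b \<alpha> y) \<le> B" by blast
qed

lemma finite_positive_lower_bound:
  fixes g1 g2 :: "'d::finite \<Rightarrow> real"
  assumes "\<And>k. 0 < g1 k" "\<And>k. 0 < g2 k" "0 < g3"
  shows "\<exists>go>0. (\<forall>k. go \<le> g1 k) \<and> (\<forall>k. go \<le> g2 k) \<and> go \<le> g3"
proof -
  let ?S = "range g1 \<union> range g2 \<union> {g3}"
  have fin: "finite ?S" by simp
  show ?thesis
  proof (intro exI[of _ "Min ?S"] conjI allI)
    have "Min ?S \<in> ?S" using fin by (intro Min_in) auto
    then show "0 < Min ?S" using assms by auto
    show "Min ?S \<le> g1 k" "Min ?S \<le> g2 k" for k by (rule Min_le[OF fin], simp)+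
    show "Min ?S \<le> g3" by (rule Min_le[OF fin]) simp
  qed
qed

lemma liouville_visc_sub:
  fixes G :: "'d::finite heis \<Rightarrow> real \<Rightarrow> 'd heis \<Rightarrow> 'd hmat \<Rightarrow> real"
  assumes lL: "0 < l" "l \<le> L"
    and G_ell: "\<And>x r p M. symmetric_mat M \<Longrightarrow> pucci_minus l L M \<le> G x r p M - G x r p 0"
    and G0: "\<And>x r p. (INF \<alpha>. c \<alpha> x * r - b \<alpha> x \<bullet> p) \<le> G x r p 0"
    and sub: "visc_sub G u"
    and growth: "\<forall>e>0. eventually (\<lambda>x. u x / ln (hnorm x) \<le> e) at_infinity"
    and cu: "\<And>\<alpha> x. 0 \<le> c \<alpha> x * u x"
    and bb: "uniformly_locally_bounded b"
    and go: "0 < go" "\<And>k. go \<le> g1 k" "\<And>k. go \<le> g2 k" "go \<le> g3"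
    and drift: "\<And>e. e > 0 \<Longrightarrow> \<exists>R. \<forall>x \<alpha>. hnorm x \<ge> R \<longrightarrow>
        frechet_derivative hnorm (at x) (b \<alpha> x)
          \<le> - frechet_derivative hnorm (at x) (gscale g1 g2 g3 x) + e / hnorm x ^ 3"
  shows "\<exists>k. \<forall>x. u x = k"
proof (rule extremal_sub_liouville[OF lL _ _ growth bb go drift])
  show "extremal_sub l L b u" by (rule extremal_sub_if_visc_sub[OF lL(2) G_ell G0 sub cu])
  show "usc u" using sub unfolding visc_sub_def by blast
qed

lemma liouville_visc_super:
  fixes G :: "'d::finite heis \<Rightarrow> real \<Rightarrow> 'd heis \<Rightarrow> 'd hmat \<Rightarrow> real"
  assumes lL: "0 < l" "l \<le> L"
    and G_ell: "\<And>x r p M. symmetric_mat M \<Longrightarrow> G x r p M - G x r p 0 \<le> pucci_plus l L M"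
    and G0: "\<And>x r p. G x r p 0 \<le> (SUP \<alpha>. c \<alpha> x * r - b \<alpha> x \<bullet> p)"
    and super: "visc_super G v"
    and growth: "\<forall>e>0. eventually (\<lambda>x. v x / ln (hnorm x) \<ge> - e) at_infinity"
    and cv: "\<And>\<alpha> x. c \<alpha> x * v x \<le> 0"
    and bb: "uniformly_locally_bounded b"
    and go: "0 < go" "\<And>k. go \<le> g1 k" "\<And>k. go \<le> g2 k" "go \<le> g3"
    and drift: "\<And>e. e > 0 \<Longrightarrow> \<exists>R. \<forall>x \<alpha>. hnorm x \<ge> R \<longrightarrow>
        frechet_derivative hnorm (at x) (b \<alpha> x)
          \<le> - frechet_derivative hnorm (at x) (gscale g1 g2 g3 x) + e / hnorm x ^ 3"
  shows "\<exists>k. \<forall>x. v x = k"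
proof -
  have "\<forall>e>0. eventually (\<lambda>x. - v x / ln (hnorm x) \<le> e) at_infinity"
  proof (intro allI impI)
    fix e :: real assume "0 < e"
    then have "eventually (\<lambda>x. v x / ln (hnorm x) \<ge> - e) at_infinity" using growth by blast
    then show "eventually (\<lambda>x. - v x / ln (hnorm x) \<le> e) at_infinity"
      by (rule eventually_mono) (simp add: minus_divide_left[symmetric])
  qed
  moreover have "extremal_sub l L b (\<lambda>x. - v x)"
    by (rule extremal_sub_if_visc_super[OF lL(2) G_ell G0 super cv])
  moreover have "usc (\<lambda>x. - v x)" using super unfolding visc_super_def usc_uminus_iff_lsc by blast
  ultimately obtain k where "\<forall>x. - v x = k" using extremal_sub_liouville[OF lL _ _ _ bb go drift] by blast
  then show ?thesis by (metis minus_minus)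
qed

theorem corollary4p18:
  fixes G :: "'d::finite heis \<Rightarrow> real \<Rightarrow> 'd heis \<Rightarrow> 'd hmat \<Rightarrow> real"
    and l L :: real
    and b :: "'a \<Rightarrow> 'd heis \<Rightarrow> 'd heis"
    and c :: "'a \<Rightarrow> 'd heis \<Rightarrow> real"
    and g1 g2 :: "'d \<Rightarrow> real" and g3 :: real
    and u v :: "'d heis \<Rightarrow> real"
  assumes lL: "0 < l" "l \<le> L"
    and G_ell: "\<And>x r p M N. symmetric_mat M \<Longrightarrow> symmetric_mat N \<Longrightarrow> psd N \<Longrightarrow>
        pucci_minus l L (M - N) \<le> G x r p M - G x r p N \<and>
        G x r p M - G x r p N \<le> pucci_plus l L (M - N)"
    and Hi_fin: "\<And>x r p. bdd_below (range (\<lambda>\<alpha>. c \<alpha> x * r - b \<alpha> x \<bullet> p))"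
    and Hs_fin: "\<And>x r p. bdd_above (range (\<lambda>\<alpha>. c \<alpha> x * r - b \<alpha> x \<bullet> p))"
    and b_lip: "\<And>R. R > 0 \<Longrightarrow> \<exists>K. \<forall>\<alpha> x y. norm x \<le> R \<longrightarrow> norm y \<le> R \<longrightarrow>
        norm (b \<alpha> x - b \<alpha> y) \<le> K * norm (x - y)"
    and c_nonneg: "\<And>\<alpha> x. 0 \<le> c \<alpha> x"
    and c_equicont: "\<And>R e. R > 0 \<Longrightarrow> e > 0 \<Longrightarrow> \<exists>\<delta>>0. \<forall>\<alpha> x y.
        norm x \<le> R \<longrightarrow> norm y \<le> R \<longrightarrow> norm (x - y) < \<delta> \<longrightarrow> \<bar>c \<alpha> x - c \<alpha> y\<bar> < e"
    and gamma_pos: "\<And>k. 0 < g1 k" "\<And>k. 0 < g2 k" "0 < g3"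
    and drift: "\<And>e. e > 0 \<Longrightarrow> \<exists>R. \<forall>x \<alpha>. hnorm x \<ge> R \<longrightarrow>
        frechet_derivative hnorm (at x) (b \<alpha> x)
          \<le> - frechet_derivative hnorm (at x) (gscale g1 g2 g3 x) + e / hnorm x ^ 3"
  shows "((\<forall>x r p. G x r p 0 \<ge> (INF \<alpha>. c \<alpha> x * r - b \<alpha> x \<bullet> p)) \<and> visc_sub G u \<and>
           (\<forall>e>0. eventually (\<lambda>x. u x / ln (hnorm x) \<le> e) at_infinity) \<and>
           ((\<forall>\<alpha> x. c \<alpha> x = 0) \<or> (\<forall>x. u x \<ge> 0))
          \<longrightarrow> (\<exists>k. \<forall>x. u x = k))
       \<and> ((\<forall>x r p. G x r p 0 \<le> (SUP \<alpha>. c \<alpha> x * r - b \<alpha> x \<bullet> p)) \<and> visc_super G v \<and>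
           (\<forall>e>0. eventually (\<lambda>x. v x / ln (hnorm x) \<ge> - e) at_infinity) \<and>
           ((\<forall>\<alpha> x. c \<alpha> x = 0) \<or> (\<forall>x. v x \<le> 0))
          \<longrightarrow> (\<exists>k. \<forall>x. v x = k))"
proof -
  obtain go where go: "0 < go" "\<And>k. go \<le> g1 k" "\<And>k. go \<le> g2 k" "go \<le> g3"
    using finite_positive_lower_bound[of g1 g2 g3] gamma_pos by blast
  have "bdd_above (range (\<lambda>\<alpha>. b \<alpha> 0 \<bullet> p))" for p
    using Hi_fin[of 0 0 p] by (simp add: bdd_below_uminus_image)
  then have bb: "uniformly_locally_bounded b" by (rule uniformly_locally_bounded_if_lipschitz[OF _ b_lip])
  have G_ell0: "pucci_minus l L M \<le> G x r p M - G x r p 0" "G x r p M - G x r p 0 \<le> pucci_plus l L M"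
    if "symmetric_mat M" for x r p M
    using G_ell[OF that symmetric_mat_zero psd_zero] by simp_all
  show ?thesis
  proof (intro conjI impI; (elim conjE)?)
    assume A: "\<forall>x r p. (INF \<alpha>. c \<alpha> x * r - b \<alpha> x \<bullet> p) \<le> G x r p 0" "visc_sub G u"
      "\<forall>e>0. eventually (\<lambda>x. u x / ln (hnorm x) \<le> e) at_infinity" "(\<forall>\<alpha> x. c \<alpha> x = 0) \<or> (\<forall>x. u x \<ge> 0)"
    have "0 \<le> c \<alpha> x * u x" for \<alpha> x using A(4) c_nonneg[of \<alpha> x] by auto
    from liouville_visc_sub[OF lL G_ell0(1) A(1)[rule_format] A(2,3) this bb go drift]
    show "\<exists>k. \<forall>x. u x = k" .
  next
    assume B: "\<forall>x r p. G x r p 0 \<le> (SUP \<alpha>. c \<alpha> x * r - b \<alpha> x \<bullet> p)" "visc_super G v"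
      "\<forall>e>0. eventually (\<lambda>x. v x / ln (hnorm x) \<ge> - e) at_infinity" "(\<forall>\<alpha> x. c \<alpha> x = 0) \<or> (\<forall>x. v x \<le> 0)"
    have "c \<alpha> x * v x \<le> 0" for \<alpha> x using B(4) c_nonneg[of \<alpha> x] by (auto simp: mult_nonneg_nonpos)
    from liouville_visc_super[OF lL G_ell0(2) B(1)[rule_format] B(2,3) this bb go drift]
    show "\<exists>k. \<forall>x. v x = k" .
  qed
qed

end
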